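(* Let $n\ge2$, let $X_1,\dots,X_n$ be infinite dimensional Hilbert spaces and $D_k\in\mathcal{B}(X_k)$. Then for every $A\in\mathcal{B}_n$, $$\bigcup_{k=1}^n\sigma_{rw}(D_k)=\sigma_{rw}(T_n^d(A))\cup\Delta_1\cup\Delta_2,$$ where $$\Delta_1=\bigcup_{k=1}^{n-1}\Big\{\lambda:\ \beta(D_k-\lambda)=\infty,\ \beta(D_s-\lambda)<\infty\text{ for }k+1\le s\le n-1,\ \sum_{s=k+1}^{n}\alpha(D_s-\lambda)=\infty\Big\}\cap\rho_{re}(D_n)\cap\Big\{\lambda:\ \sum_{s=1}^n\alpha(D_s-\lambda)\ge\sum_{s=1}^n\beta(D_s-\lambda)\Big\}$$ (for $k=n-1$ the condition on $k+1\le s\le n-1$ is vacuous), and $$\Delta_2=\bigcup_{k=1}^{n}\Big\{\lambda:\ \beta(D_s-\lambda)<\infty\text{ for all }1\le s\le n,\ \sum_{s=1}^n\alpha(D_s-\lambda)\ge\sum_{s=1}^n\beta(D_s-\lambda),\ \beta(D_k-\lambda)>\alpha(D_k-\lambda)\Big\}.$$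
   Context: For a bounded operator $T$, $\alpha(T)=\dim\mathcal{N}(T)$, $\beta(T)=\operatorname{codim}\mathcal{R}(T)$, values in $\{0,1,\dots\}\cup\{\infty\}$, with sums/comparisons in this extended set; $\mathrm{ind}(T)=\alpha(T)-\beta(T)$. $T$ is right Fredholm if $\beta(T)<\infty$ and $\mathcal{N}(T)$ is complemented; right Weyl if right Fredholm with $\mathrm{ind}(T)\ge0$. $\sigma_{re}(T)$, $\sigma_{rw}(T)$ are the sets of $\lambda\in\mathbb{C}$ with $\lambda-T$ not right Fredholm, resp. not right Weyl; $\rho_{re}=\mathbb{C}\setminus\sigma_{re}$. $\mathcal{B}_n$ is the set of tuples $A=(A_{ij})_{1\le i<j\le n}$, $A_{ij}\in\mathcal{B}(X_j,X_i)$; $T_n^d(A)$ is the upper triangular operator matrix on $X_1\oplus\cdots\oplus X_n$ with diagonal $D_1,\dots,D_n$, entries $A_{ij}$ above the diagonal and zeros below. *)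

theory Defs
  imports "HOL-Analysis.Analysis" "HOL-Library.Extended_Real"
begin

class chilbert = banach +
  fixes scaleC :: "complex \<Rightarrow> 'a \<Rightarrow> 'a" (infixr "*\<^sub>C" 75)
    and cinner :: "'a \<Rightarrow> 'a \<Rightarrow> complex"
  assumes scaleC_add_right: "a *\<^sub>C (x + y) = a *\<^sub>C x + a *\<^sub>C y"
    and scaleC_add_left: "(a + b) *\<^sub>C x = a *\<^sub>C x + b *\<^sub>C x"
    and scaleC_scaleC: "a *\<^sub>C (b *\<^sub>C x) = (a * b) *\<^sub>C x"
    and scaleC_one: "1 *\<^sub>C x = x"
    and scaleR_scaleC: "scaleR r x = complex_of_real r *\<^sub>C x"
    and cinner_conj: "cinner x y = cnj (cinner y x)"
    and cinner_add_left: "cinner (x + y) z = cinner x z + cinner y z"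
    and cinner_scaleC_left: "cinner (a *\<^sub>C x) y = cnj a * cinner x y"
    and cinner_norm: "cinner x x = complex_of_real ((norm x)\<^sup>2)"

definition csubspace :: "'a::chilbert set \<Rightarrow> bool" where
  "csubspace S \<longleftrightarrow> 0 \<in> S \<and> (\<forall>x\<in>S. \<forall>y\<in>S. x + y \<in> S) \<and> (\<forall>c. \<forall>x\<in>S. c *\<^sub>C x \<in> S)"

definition cindependent :: "'a::chilbert set \<Rightarrow> bool" where
  "cindependent F \<longleftrightarrow> (\<forall>G c. finite G \<longrightarrow> G \<subseteq> F \<longrightarrow> (\<Sum>x\<in>G. c x *\<^sub>C x) = 0 \<longrightarrow> (\<forall>x\<in>G. c x = 0))"

definition edim :: "'a::chilbert set \<Rightarrow> enat" where
  "edim S = Sup {enat (card F) | F. finite F \<and> F \<subseteq> S \<and> cindependent F}"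

definition ecodim :: "'a::chilbert set \<Rightarrow> 'a set \<Rightarrow> enat" where
  "ecodim V R = Inf {edim M | M. csubspace M \<and> M \<subseteq> V \<and> R \<inter> M = {0} \<and>
                    V = {a + b | a b. a \<in> R \<and> b \<in> M}}"

text \<open>Bounded linear operators from the (closed) subspace \<open>V\<close> to the subspace \<open>W\<close>
(only the values on \<open>V\<close> matter).\<close>
definition bop :: "'a::chilbert set \<Rightarrow> 'a set \<Rightarrow> ('a \<Rightarrow> 'a) \<Rightarrow> bool" where
  "bop V W T \<longleftrightarrow> (\<forall>x\<in>V. T x \<in> W) \<and> (\<forall>x\<in>V. \<forall>y\<in>V. T (x + y) = T x + T y) \<and>
     (\<forall>c. \<forall>x\<in>V. T (c *\<^sub>C x) = c *\<^sub>C T x) \<and> (\<exists>K. \<forall>x\<in>V. norm (T x) \<le> K * norm x)"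

definition kernel :: "'a::chilbert set \<Rightarrow> ('a \<Rightarrow> 'a) \<Rightarrow> 'a set" where
  "kernel V T = {x \<in> V. T x = 0}"

definition alpha :: "'a::chilbert set \<Rightarrow> ('a \<Rightarrow> 'a) \<Rightarrow> enat" where
  "alpha V T = edim (kernel V T)"

definition beta :: "'a::chilbert set \<Rightarrow> ('a \<Rightarrow> 'a) \<Rightarrow> enat" where
  "beta V T = ecodim V (T ` V)"

definition ind :: "'a::chilbert set \<Rightarrow> ('a \<Rightarrow> 'a) \<Rightarrow> ereal" where
  "ind V T = ereal_of_enat (alpha V T) - ereal_of_enat (beta V T)"

definition complemented :: "'a::chilbert set \<Rightarrow> 'a set \<Rightarrow> bool" where
  "complemented V N \<longleftrightarrow> (\<exists>M. csubspace M \<and> closed M \<and> M \<subseteq> V \<and> N \<inter> M = {0} \<and>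
                             V = {a + b | a b. a \<in> N \<and> b \<in> M})"

definition right_fredholm :: "'a::chilbert set \<Rightarrow> ('a \<Rightarrow> 'a) \<Rightarrow> bool" where
  "right_fredholm V T \<longleftrightarrow> bop V V T \<and> beta V T < \<infinity> \<and> complemented V (kernel V T)"

definition right_weyl :: "'a::chilbert set \<Rightarrow> ('a \<Rightarrow> 'a) \<Rightarrow> bool" where
  "right_weyl V T \<longleftrightarrow> right_fredholm V T \<and> ind V T \<ge> 0"

definition lminus :: "complex \<Rightarrow> ('a::chilbert \<Rightarrow> 'a) \<Rightarrow> 'a \<Rightarrow> 'a" where
  "lminus l T = (\<lambda>x. l *\<^sub>C x - T x)"

definition minusl :: "('a::chilbert \<Rightarrow> 'a) \<Rightarrow> complex \<Rightarrow> 'a \<Rightarrow> 'a" where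
  "minusl T l = (\<lambda>x. T x - l *\<^sub>C x)"

definition sigma_re :: "'a::chilbert set \<Rightarrow> ('a \<Rightarrow> 'a) \<Rightarrow> complex set" where
  "sigma_re V T = {l. \<not> right_fredholm V (lminus l T)}"

definition sigma_rw :: "'a::chilbert set \<Rightarrow> ('a \<Rightarrow> 'a) \<Rightarrow> complex set" where
  "sigma_rw V T = {l. \<not> right_weyl V (lminus l T)}"

definition rho_re :: "'a::chilbert set \<Rightarrow> ('a \<Rightarrow> 'a) \<Rightarrow> complex set" where
  "rho_re V T = - sigma_re V T"

text \<open>The whole space is the internal orthogonal direct sum \<open>X 1 \<oplus> ... \<oplus> X n\<close>
of closed subspaces.\<close>
definition orth_decomp :: "nat \<Rightarrow> (nat \<Rightarrow> 'a::chilbert set) \<Rightarrow> bool" where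
  "orth_decomp n X \<longleftrightarrow>
     (\<forall>k\<in>{1..n}. csubspace (X k) \<and> closed (X k)) \<and>
     (\<forall>i\<in>{1..n}. \<forall>j\<in>{1..n}. i \<noteq> j \<longrightarrow> (\<forall>x\<in>X i. \<forall>y\<in>X j. cinner x y = 0)) \<and>
     (UNIV = {(\<Sum>k=1..n. x k) | x. \<forall>k\<in>{1..n}. x k \<in> X k})"

definition comp :: "nat \<Rightarrow> (nat \<Rightarrow> 'a::chilbert set) \<Rightarrow> nat \<Rightarrow> 'a \<Rightarrow> 'a" where
  "comp n X k z = (THE y. \<exists>x. (\<forall>j\<in>{1..n}. x j \<in> X j) \<and> z = (\<Sum>j=1..n. x j) \<and> y = x k)"

definition Tmat :: "nat \<Rightarrow> (nat \<Rightarrow> 'a::chilbert set) \<Rightarrow> (nat \<Rightarrow> 'a \<Rightarrow> 'a)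
                    \<Rightarrow> (nat \<Rightarrow> nat \<Rightarrow> 'a \<Rightarrow> 'a) \<Rightarrow> 'a \<Rightarrow> 'a" where
  "Tmat n X D A z = (\<Sum>i=1..n. D i (comp n X i z) + (\<Sum>j\<in>{i+1..n}. A i j (comp n X j z)))"

end

(*
  Write F_j = X_1 \<oplus> ... \<oplus> X_j. On F_(j+1) = F_j \<oplus> X_(j+1) the operator \<lambda> - T is an upper
  triangular 2x2 block operator with diagonal entries (\<lambda> - T)|F_j and \<lambda> - D_(j+1). For such a
  block operator [T1 *; 0 T2] there are k, c, r with \<alpha>(T) = \<alpha>(T1) + k, \<beta>(T) = c + \<beta>(T2),
  \<beta>(T1) = c + r and \<alpha>(T2) = k + r, obtained from complements of the relevant kernels and ranges.
  In a Hilbert space kernels of bounded operators are complemented, so an operator is right Weyl iff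
  \<beta> < \<infinity> and \<beta> \<le> \<alpha>. Induction along the flag gives the index formula
  \<alpha>(\<lambda> - T) + \<Sum> \<beta>(D_k - \<lambda>) = \<Sum> \<alpha>(D_k - \<lambda>) + \<beta>(\<lambda> - T) when all defects are finite, which
  yields \<sigma>_rw(T) \<subseteq> \<Union> \<sigma>_rw(D_k) and the set \<Delta>_2. If some defect is infinite, an infinite defect
  propagates up the flag unless a later nullity is infinite; since \<lambda> - T is right Weyl, the
  largest index with infinite defect therefore lands in \<Delta>_1.
*)

theory Submission
  imports Defs
begin

section \<open>Dimension and codimension of complex subspaces\<close>

interpretation cv: vector_space "scaleC :: complex \<Rightarrow> 'a::chilbert \<Rightarrow> 'a"
  by unfold_locales (auto simp: scaleC_add_right scaleC_add_left scaleC_scaleC scaleC_one)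

lemma cindependent_iff_independent: "cindependent F \<longleftrightarrow> cv.independent F"
  unfolding cindependent_def cv.dependent_explicit by blast

lemma csubspace_iff_subspace: "csubspace S \<longleftrightarrow> cv.subspace S"
  unfolding csubspace_def cv.subspace_def by blast

definition ecard :: "'b set \<Rightarrow> enat" where
  "ecard B = (if finite B then enat (card B) else \<infinity>)"

lemma ecard_Un_disjoint: "A \<inter> B = {} \<Longrightarrow> ecard (A \<union> B) = ecard A + ecard B"
  by (auto simp: ecard_def card_Un_disjoint)

lemma enat_eq_infinity_if_bounds: assumes "\<And>m. enat m \<le> (x::enat)" shows "x = \<infinity>"
proof (cases x)
  case (enat n)
  then have "enat (Suc n) \<le> enat n" using assms by metis
  then show ?thesis by simp
qed simp

lemma edim_eq_ecard_basis:
  fixes S :: "'a::chilbert set"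
  assumes B: "cv.independent B" "B \<subseteq> S" "S \<subseteq> cv.span B"
  shows "edim S = ecard B"
proof (cases "finite B")
  case True
  have "edim S \<le> enat (card B)"
    unfolding edim_def
  proof (rule Sup_least, clarify)
    fix F assume F: "finite F" "F \<subseteq> S" "cindependent F"
    then show "enat (card F) \<le> enat (card B)"
      using cv.independent_span_bound[OF True, of F] B by (auto simp: cindependent_iff_independent)
  qed
  moreover have "enat (card B) \<le> edim S"
    unfolding edim_def by (rule Sup_upper) (use B True in \<open>auto simp: cindependent_iff_independent\<close>)
  ultimately show ?thesis using True by (auto simp: ecard_def)
next
  case False
  have "edim S = \<infinity>"
  proof (rule enat_eq_infinity_if_bounds)
    fix m
    obtain F where F: "finite F" "card F = m" "F \<subseteq> B"
      using infinite_arbitrarily_large[OF False] by blast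
    show "enat m \<le> edim S"
      unfolding edim_def by (rule Sup_upper)
        (use F B cv.independent_mono[of B F] in \<open>auto simp: cindependent_iff_independent\<close>)
  qed
  then show ?thesis using False by (simp add: ecard_def)
qed

lemma subspace_obtain_basis:
  fixes S :: "'a::chilbert set"
  assumes "cv.subspace S"
  obtains B where "cv.independent B" "B \<subseteq> S" "cv.span B = S"
proof -
  obtain B where "cv.independent B" "B \<subseteq> S" "S \<subseteq> cv.span B"
    by (rule cv.maximal_independent_subset_extend[of "{}" S]) (auto simp: cv.independent_empty)
  with assms cv.span_subspace that show ?thesis by blast
qed

lemma edim_zero: "edim ({0} :: 'a::chilbert set) = 0"
proof -
  have "edim ({0} :: 'a::chilbert set) = ecard ({}::'a set)"
    by (rule edim_eq_ecard_basis) (auto simp: cv.independent_empty)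
  then show ?thesis by (simp add: ecard_def zero_enat_def)
qed

lemma span_disjoint_subsets_of_independent:
  fixes C :: "'a::chilbert set"
  assumes C: "cv.independent C" "B1 \<subseteq> C" "B2 \<subseteq> C" "B1 \<inter> B2 = {}"
    and x: "x \<in> cv.span B1" "x \<in> cv.span B2"
  shows "x = 0"
proof -
  obtain t1 r where t1: "finite t1" "t1 \<subseteq> B1" "x = (\<Sum>a\<in>t1. r a *\<^sub>C a)"
    using x(1) unfolding cv.span_explicit by blast
  obtain t2 s where t2: "finite t2" "t2 \<subseteq> B2" "x = (\<Sum>a\<in>t2. s a *\<^sub>C a)"
    using x(2) unfolding cv.span_explicit by blast
  define w where "w a = (if a \<in> t1 then r a else - s a)" for a
  have dis: "t1 \<inter> t2 = {}" using t1 t2 C by auto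
  have "(\<Sum>a\<in>t1 \<union> t2. w a *\<^sub>C a) = (\<Sum>a\<in>t1. w a *\<^sub>C a) + (\<Sum>a\<in>t2. w a *\<^sub>C a)"
    by (rule sum.union_disjoint) (use t1 t2 dis in auto)
  also have "(\<Sum>a\<in>t1. w a *\<^sub>C a) = x" using t1 by (simp add: w_def)
  also have "(\<Sum>a\<in>t2. w a *\<^sub>C a) = (\<Sum>a\<in>t2. - (s a *\<^sub>C a))"
    using dis by (intro sum.cong) (auto simp: w_def cv.scale_minus_left)
  also have "\<dots> = - x" using t2 by (simp add: sum_negf)
  finally have z: "(\<Sum>a\<in>t1 \<union> t2. w a *\<^sub>C a) = 0" by simp
  have "\<forall>a\<in>t1. w a = 0"
  proof
    fix a assume a: "a \<in> t1"
    show "w a = 0" by (rule cv.independentD[OF C(1) _ _ z]) (use t1 t2 C a in auto)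
  qed
  then show ?thesis using t1 by (simp add: w_def)
qed

lemma independent_Un_if_spans_disjoint:
  fixes B1 :: "'a::chilbert set"
  assumes "cv.independent B1" "cv.independent B2" "cv.span B1 \<inter> cv.span B2 \<subseteq> {0}"
  shows "cv.independent (B1 \<union> B2)" "B1 \<inter> B2 = {}"
proof -
  show "B1 \<inter> B2 = {}"
    using assms cv.span_base cv.dependent_zero by blast
  show "cv.independent (B1 \<union> B2)"
    unfolding cv.dependent_explicit
  proof clarify
    fix t u v assume t: "finite t" "t \<subseteq> B1 \<union> B2" "(\<Sum>v\<in>t. u v *\<^sub>C v) = 0" "v \<in> t" "u v \<noteq> 0"
    let ?s1 = "\<Sum>v\<in>t \<inter> B1. u v *\<^sub>C v" and ?s2 = "\<Sum>v\<in>t - B1. u v *\<^sub>C v"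
    have "?s1 + ?s2 = 0" using t(1,3) by (metis sum.Int_Diff)
    then have e: "?s1 = - ?s2" by (simp add: eq_neg_iff_add_eq_0)
    have "?s1 \<in> cv.span B1"
      by (intro cv.span_sum cv.span_scale cv.span_base) auto
    moreover have "- ?s2 \<in> cv.span B2"
      using t(2) by (intro cv.span_neg cv.span_sum cv.span_scale cv.span_base) auto
    ultimately have z1: "?s1 = 0" using e assms(3) by auto
    then have z2: "?s2 = 0" using e by simp
    show False
    proof (cases "v \<in> B1")
      case True
      then show False using cv.independentD[OF assms(1) _ _ z1, of v] t by auto
    next
      case False
      then show False using cv.independentD[OF assms(2) _ _ z2, of v] t by auto
    qed
  qed
qed

abbreviation ssum :: "'b::plus set \<Rightarrow> 'b set \<Rightarrow> 'b set" where
  "ssum A B \<equiv> {a + b | a b. a \<in> A \<and> b \<in> B}"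

definition lin_on :: "'a::chilbert set \<Rightarrow> ('a \<Rightarrow> 'a) \<Rightarrow> bool" where
  "lin_on S f \<longleftrightarrow> (\<forall>x\<in>S. \<forall>y\<in>S. f (x + y) = f x + f y) \<and> (\<forall>c. \<forall>x\<in>S. f (c *\<^sub>C x) = c *\<^sub>C f x)"

definition is_complement :: "'a::chilbert set \<Rightarrow> 'a set \<Rightarrow> 'a set \<Rightarrow> bool" where
  "is_complement V R M \<longleftrightarrow> cv.subspace M \<and> M \<subseteq> V \<and> R \<inter> M = {0} \<and> V = ssum R M"

lemma lin_on_add: "lin_on S f \<Longrightarrow> x \<in> S \<Longrightarrow> y \<in> S \<Longrightarrow> f (x + y) = f x + f y"
  unfolding lin_on_def by blast

lemma lin_on_scale: "lin_on S f \<Longrightarrow> x \<in> S \<Longrightarrow> f (c *\<^sub>C x) = c *\<^sub>C f x"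
  unfolding lin_on_def by blast

lemma lin_on_zero: "lin_on S f \<Longrightarrow> cv.subspace S \<Longrightarrow> f 0 = 0"
  using lin_on_scale[of S f 0 0] cv.subspace_0 by force

lemma lin_on_neg: "lin_on S f \<Longrightarrow> x \<in> S \<Longrightarrow> f (- x) = - f x"
  using lin_on_scale[of S f x "-1"] by (simp add: cv.scale_minus_left)

lemma lin_on_diff: "lin_on S f \<Longrightarrow> cv.subspace S \<Longrightarrow> x \<in> S \<Longrightarrow> y \<in> S \<Longrightarrow> f (x - y) = f x - f y"
  using lin_on_add[of S f x "-y"] lin_on_neg[of S f y] cv.subspace_neg[of S y] by simp

lemma lin_on_subset: "lin_on S f \<Longrightarrow> T \<subseteq> S \<Longrightarrow> lin_on T f"
  unfolding lin_on_def by blast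

lemma lin_on_sum:
  assumes "lin_on S f" "cv.subspace S" "finite t" "\<forall>a\<in>t. g a \<in> S"
  shows "f (\<Sum>a\<in>t. c a *\<^sub>C g a) = (\<Sum>a\<in>t. c a *\<^sub>C f (g a))"
  using assms(3,4)
proof (induction t rule: finite_induct)
  case empty then show ?case using lin_on_zero[OF assms(1,2)] by simp
next
  case (insert x F)
  have "(\<Sum>a\<in>F. c a *\<^sub>C g a) \<in> S"
    using insert assms(2) by (intro cv.subspace_sum cv.subspace_scale) auto
  then show ?case using insert assms lin_on_add[OF assms(1)] lin_on_scale[OF assms(1)]
    by (simp add: cv.subspace_scale)
qed

lemma subspace_lin_image:
  assumes S: "cv.subspace S" and f: "lin_on S f"
  shows "cv.subspace (f ` S)"
  unfolding cv.subspace_def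
proof (intro conjI ballI allI)
  show "0 \<in> f ` S" using lin_on_zero[OF f S] cv.subspace_0[OF S] by force
next
  fix x y assume "x \<in> f ` S" "y \<in> f ` S"
  then obtain a b where ab: "a \<in> S" "b \<in> S" "x = f a" "y = f b" by blast
  then have "x + y = f (a + b)" using lin_on_add[OF f] by simp
  then show "x + y \<in> f ` S" using cv.subspace_add[OF S ab(1,2)] by blast
next
  fix c x assume "x \<in> f ` S"
  then obtain a where a: "a \<in> S" "x = f a" by blast
  then have "c *\<^sub>C x = f (c *\<^sub>C a)" using lin_on_scale[OF f] by simp
  then show "c *\<^sub>C x \<in> f ` S" using cv.subspace_scale[OF S a(1)] by blast
qed

lemma subspace_lin_kernel:
  assumes S: "cv.subspace S" and f: "lin_on S f"
  shows "cv.subspace {x\<in>S. f x = 0}"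
  unfolding cv.subspace_def
proof (intro conjI ballI allI)
  show "0 \<in> {x \<in> S. f x = 0}" using lin_on_zero[OF f S] cv.subspace_0[OF S] by simp
next
  fix x y assume "x \<in> {x \<in> S. f x = 0}" "y \<in> {x \<in> S. f x = 0}"
  then show "x + y \<in> {x \<in> S. f x = 0}"
    using lin_on_add[OF f, of x y] cv.subspace_add[OF S, of x y] by simp
next
  fix c x assume "x \<in> {x \<in> S. f x = 0}"
  then show "c *\<^sub>C x \<in> {x \<in> S. f x = 0}"
    using lin_on_scale[OF f, of x c] cv.subspace_scale[OF S, of x c] by simp
qed

lemma ssum_subspaces_eq_span:
  assumes "cv.subspace A" "cv.subspace B"
  shows "ssum A B = cv.span (A \<union> B)"
proof -
  have "cv.span A = A" "cv.span B = B" using assms cv.span_eq_iff by blast+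
  then show ?thesis using cv.span_Un[of A B] by (simp only:)
qed

lemma subspace_ssum: "cv.subspace A \<Longrightarrow> cv.subspace B \<Longrightarrow> cv.subspace (ssum A B)"
  using ssum_subspaces_eq_span[of A B] by simp

lemma edim_ssum:
  fixes M1 :: "'a::chilbert set"
  assumes "cv.subspace M1" "cv.subspace M2" "M1 \<inter> M2 \<subseteq> {0}"
  shows "edim (ssum M1 M2) = edim M1 + edim M2"
proof -
  obtain B1 where B1: "cv.independent B1" "B1 \<subseteq> M1" "cv.span B1 = M1"
    using subspace_obtain_basis[OF assms(1)] by blast
  obtain B2 where B2: "cv.independent B2" "B2 \<subseteq> M2" "cv.span B2 = M2"
    using subspace_obtain_basis[OF assms(2)] by blast
  have I: "cv.independent (B1 \<union> B2)" "B1 \<inter> B2 = {}"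
    using independent_Un_if_spans_disjoint[of B1 B2] B1 B2 assms(3) by auto
  have sp: "cv.span (B1 \<union> B2) = ssum M1 M2" using cv.span_Un[of B1 B2] B1 B2 by simp
  have "edim (ssum M1 M2) = ecard (B1 \<union> B2)"
    by (rule edim_eq_ecard_basis) (use I sp cv.span_superset[of "B1 \<union> B2"] in auto)
  also have "\<dots> = ecard B1 + ecard B2" using I(2) by (rule ecard_Un_disjoint)
  also have "ecard B1 = edim M1" using edim_eq_ecard_basis[of B1 M1] B1 by auto
  also have "ecard B2 = edim M2" using edim_eq_ecard_basis[of B2 M2] B2 by auto
  finally show ?thesis .
qed

lemma independent_lin_image_inj:
  fixes S :: "'a::chilbert set"
  assumes S: "cv.subspace S" and f: "lin_on S f" and inj: "inj_on f S"
    and B: "cv.independent B" "B \<subseteq> S"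
  shows "cv.independent (f ` B)"
  unfolding cv.dependent_explicit
proof clarify
  fix t u v assume t: "finite t" "t \<subseteq> f ` B" "(\<Sum>v\<in>t. u v *\<^sub>C v) = 0" "v \<in> t" "u v \<noteq> 0"
  define t' where "t' = {b\<in>B. f b \<in> t}"
  have ft': "f ` t' = t" using t(2) by (auto simp: t'_def)
  have injt': "inj_on f t'" using inj by (rule inj_on_subset) (use B(2) in \<open>auto simp: t'_def\<close>)
  have fint': "finite t'" using finite_imageD[of f t'] ft' t(1) injt' by simp
  have "f (\<Sum>b\<in>t'. u (f b) *\<^sub>C b) = (\<Sum>b\<in>t'. u (f b) *\<^sub>C f b)"
    by (rule lin_on_sum[OF f S fint', of "\<lambda>b. b" "\<lambda>b. u (f b)", simplified]) (use B(2) in \<open>auto simp: t'_def\<close>)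
  also have "\<dots> = (\<Sum>v\<in>t. u v *\<^sub>C v)"
    using sum.reindex[OF injt', of "\<lambda>v. u v *\<^sub>C v"] ft' by simp
  finally have "f (\<Sum>b\<in>t'. u (f b) *\<^sub>C b) = f 0" using t(3) lin_on_zero[OF f S] by simp
  moreover have "(\<Sum>b\<in>t'. u (f b) *\<^sub>C b) \<in> S"
    using B(2) S by (intro cv.subspace_sum cv.subspace_scale) (auto simp: t'_def)
  ultimately have z: "(\<Sum>b\<in>t'. u (f b) *\<^sub>C b) = 0"
    using inj cv.subspace_0[OF S] by (meson inj_onD)
  obtain b where b: "b \<in> t'" "f b = v" using ft' t(4) by blast
  have "u (f b) = 0"
    by (rule cv.independentD[OF B(1) fint' _ z b(1)]) (auto simp: t'_def)
  then show False using b t(5) by simp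
qed

lemma lin_image_span:
  fixes B :: "'a::chilbert set"
  assumes f: "lin_on (cv.span B) f"
  shows "f ` cv.span B \<subseteq> cv.span (f ` B)"
proof
  fix y assume "y \<in> f ` cv.span B"
  then obtain t r where tr: "finite t" "t \<subseteq> B" "y = f (\<Sum>a\<in>t. r a *\<^sub>C a)"
    unfolding cv.span_explicit by blast
  have "y = (\<Sum>a\<in>t. r a *\<^sub>C f a)"
    using tr lin_on_sum[OF f cv.subspace_span tr(1), of "\<lambda>a. a" r] cv.span_base by auto
  also have "\<dots> \<in> cv.span (f ` B)"
    using tr(2) by (intro cv.span_sum cv.span_scale cv.span_base) auto
  finally show "y \<in> cv.span (f ` B)" .
qed

lemma edim_lin_image_inj:
  fixes S :: "'a::chilbert set"
  assumes S: "cv.subspace S" and f: "lin_on S f" and inj: "inj_on f S"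
  shows "edim (f ` S) = edim S"
proof -
  obtain B where B: "cv.independent B" "B \<subseteq> S" "cv.span B = S" using subspace_obtain_basis[OF S] by blast
  have "edim (f ` S) = ecard (f ` B)"
    using independent_lin_image_inj[OF S f inj B(1,2)] lin_image_span[of B f] f B(2,3)
    by (intro edim_eq_ecard_basis) auto
  also have "\<dots> = ecard B"
    using inj_on_subset[OF inj B(2)] by (simp add: ecard_def card_image finite_image_iff)
  also have "\<dots> = edim S" using edim_eq_ecard_basis[of B S] B by auto
  finally show ?thesis .
qed

lemma complement_exists:
  fixes V :: "'a::chilbert set"
  assumes R: "cv.subspace R" and V: "cv.subspace V" and RV: "R \<subseteq> V"
  obtains M where "is_complement V R M"
proof -
  obtain B where B: "cv.independent B" "B \<subseteq> R" "cv.span B = R" using subspace_obtain_basis[OF R] by blast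
  obtain C where C: "B \<subseteq> C" "C \<subseteq> V" "cv.independent C" "V \<subseteq> cv.span C"
    using cv.maximal_independent_subset_extend[of B V] B RV by blast
  define M where "M = cv.span (C - B)"
  have "cv.subspace M" by (simp add: M_def)
  moreover have "M \<subseteq> V" unfolding M_def using C V cv.span_minimal[of "C - B" V] by blast
  moreover have "R \<inter> M = {0}"
  proof -
    have "R \<inter> M \<subseteq> {0}"
      using span_disjoint_subsets_of_independent[OF C(3), of B "C - B"] C B unfolding M_def by blast
    then show ?thesis using cv.subspace_0[OF R] cv.span_zero M_def by blast
  qed
  moreover have "V = ssum R M"
  proof
    have "cv.span C = cv.span (B \<union> (C - B))" using C(1) by (metis Un_Diff_cancel sup.absorb2)
    then have "cv.span C = ssum R M" using cv.span_Un[of B "C - B"] B M_def by simp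
    then show "V \<subseteq> ssum R M" using C(4) by simp
    show "ssum R M \<subseteq> V" using RV \<open>M \<subseteq> V\<close> cv.subspace_add[OF V] by blast
  qed
  ultimately show ?thesis using that unfolding is_complement_def by blast
qed

locale proj_decomp =
  fixes V W U :: "'a::chilbert set" and P :: "'a \<Rightarrow> 'a"
  assumes V: "cv.subspace V" and W: "cv.subspace W" and U: "cv.subspace U"
    and WV: "W \<subseteq> V" and UV: "U \<subseteq> V" and WU: "\<And>x. x \<in> W \<Longrightarrow> x \<in> U \<Longrightarrow> x = 0"
    and dec: "\<And>v. v \<in> V \<Longrightarrow> P v \<in> U \<and> v - P v \<in> W"
begin

lemma proj_eqI:
  assumes v: "v \<in> V" and u: "u \<in> U" and vu: "v - u \<in> W"
  shows "P v = u"
proof -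
  have "(v - u) - (v - P v) \<in> W" using cv.subspace_diff[OF W vu] dec[OF v] by blast
  moreover have "(v - u) - (v - P v) = P v - u" by simp
  moreover have "P v - u \<in> U" using cv.subspace_diff[OF U] dec[OF v] u by blast
  ultimately have "P v - u = 0" using WU by metis
  then show ?thesis by simp
qed

lemma proj_U: "u \<in> U \<Longrightarrow> P u = u"
  using proj_eqI[of u u] UV cv.subspace_0[OF W] by auto

lemma proj_W: "w \<in> W \<Longrightarrow> P w = 0"
  using proj_eqI[of w 0] WV cv.subspace_0[OF U] by auto

lemma proj_lin: "lin_on V P"
  unfolding lin_on_def
proof (intro conjI ballI allI)
  fix x y assume xy: "x \<in> V" "y \<in> V"
  show "P (x + y) = P x + P y"
  proof (rule proj_eqI)
    show "x + y \<in> V" using cv.subspace_add[OF V xy] .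
    show "P x + P y \<in> U" using cv.subspace_add[OF U] dec xy by blast
    have e: "x + y - (P x + P y) = (x - P x) + (y - P y)" by simp
    have "(x - P x) + (y - P y) \<in> W" using cv.subspace_add[OF W] dec xy by blast
    then show "x + y - (P x + P y) \<in> W" by (metis e)
  qed
next
  fix c x assume x: "x \<in> V"
  show "P (c *\<^sub>C x) = c *\<^sub>C P x"
  proof (rule proj_eqI)
    show "c *\<^sub>C x \<in> V" using cv.subspace_scale[OF V x] .
    show "c *\<^sub>C P x \<in> U" using cv.subspace_scale[OF U] dec x by blast
    have e: "c *\<^sub>C x - c *\<^sub>C P x = c *\<^sub>C (x - P x)" by (simp add: cv.scale_right_diff_distrib)
    have "c *\<^sub>C (x - P x) \<in> W" using cv.subspace_scale[OF W] dec x by blast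
    then show "c *\<^sub>C x - c *\<^sub>C P x \<in> W" by (metis e)
  qed
qed

lemma V_eq_ssum: "V = ssum W U"
proof
  show "V \<subseteq> ssum W U"
  proof
    fix v assume v: "v \<in> V"
    have "v = (v - P v) + P v" by simp
    then show "v \<in> ssum W U" using dec[OF v] by blast
  qed
  show "ssum W U \<subseteq> V" using WV UV cv.subspace_add[OF V] by blast
qed

end

lemma complement_obtain_projection:
  assumes W: "cv.subspace W" and V: "cv.subspace V" and U: "is_complement V W U"
  obtains P where "proj_decomp V W U P"
proof -
  have Us: "cv.subspace U" "U \<subseteq> V" "W \<inter> U = {0}" "V = ssum W U"
    using U by (auto simp: is_complement_def)
  have WV: "W \<subseteq> V"
  proof
    fix w assume "w \<in> W"
    then have "w + 0 \<in> ssum W U" using cv.subspace_0[OF Us(1)] by blast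
    then show "w \<in> V" using Us(4) by simp
  qed
  have "\<forall>v\<in>V. \<exists>u. u \<in> U \<and> v - u \<in> W"
  proof
    fix v assume "v \<in> V"
    then obtain w u where "v = w + u" "w \<in> W" "u \<in> U" using Us(4) by blast
    then show "\<exists>u. u \<in> U \<and> v - u \<in> W" by (intro exI[of _ u]) simp
  qed
  then obtain P where P: "\<forall>v\<in>V. P v \<in> U \<and> v - P v \<in> W" by metis
  show thesis
  proof (rule that[of P], unfold_locales)
    show "x = 0" if "x \<in> W" "x \<in> U" for x using that Us(3) by blast
  qed (use W V Us(1,2) WV P in simp_all)
qed

lemma edim_complements_eq:
  fixes V :: "'a::chilbert set"
  assumes R: "cv.subspace R" and V: "cv.subspace V"
    and M1: "is_complement V R M1" and M2: "is_complement V R M2"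
  shows "edim M1 = edim M2"
proof -
  obtain P where "proj_decomp V R M2 P" using complement_obtain_projection[OF R V M2] .
  then interpret proj_decomp V R M2 P .
  have M1s: "cv.subspace M1" "M1 \<subseteq> V" "R \<inter> M1 = {0}" "V = ssum R M1"
    using M1 by (auto simp: is_complement_def)
  have inj: "inj_on P M1"
  proof (rule inj_onI)
    fix x y assume xy: "x \<in> M1" "y \<in> M1" "P x = P y"
    then have xyV: "x \<in> V" "y \<in> V" using M1s(2) by blast+
    have d: "x - y \<in> M1" "x - y \<in> V" using cv.subspace_diff[OF M1s(1)] xy M1s(2) by blast+
    have "P (x - y) = 0" using lin_on_diff[OF proj_lin V xyV] xy(3) by simp
    then have "x - y \<in> R" using dec[OF d(2)] by simp
    then have "x - y = 0" using d(1) M1s(3) by blast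
    then show "x = y" by simp
  qed
  have "P ` M1 = M2"
  proof
    show "P ` M1 \<subseteq> M2" using dec M1s(2) by blast
    show "M2 \<subseteq> P ` M1"
    proof
      fix m assume m: "m \<in> M2"
      then obtain r m1 where rm: "m = r + m1" "r \<in> R" "m1 \<in> M1" using UV M1s(4) by blast
      have "m1 - m \<in> R" using rm cv.subspace_neg[OF R rm(2)] by simp
      then have "P m1 = m" using proj_eqI m rm(3) M1s(2) by blast
      then show "m \<in> P ` M1" using rm by blast
    qed
  qed
  then show ?thesis
    using edim_lin_image_inj[OF M1s(1) lin_on_subset[OF proj_lin M1s(2)] inj] by simp
qed

lemma ecodim_eq_edim_complement:
  fixes V :: "'a::chilbert set"
  assumes R: "cv.subspace R" and V: "cv.subspace V" and M: "is_complement V R M"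
  shows "ecodim V R = edim M"
proof -
  have "edim M' = edim M" if "csubspace M' \<and> M' \<subseteq> V \<and> R \<inter> M' = {0} \<and> V = ssum R M'" for M'
    using edim_complements_eq[OF R V _ M, of M'] that
    by (auto simp: is_complement_def csubspace_iff_subspace)
  moreover have "csubspace M \<and> M \<subseteq> V \<and> R \<inter> M = {0} \<and> V = ssum R M"
    using M unfolding is_complement_def csubspace_iff_subspace by blast
  ultimately have "{edim M' | M'. csubspace M' \<and> M' \<subseteq> V \<and> R \<inter> M' = {0} \<and> V = ssum R M'} = {edim M}"
    by blast
  then show ?thesis unfolding ecodim_def by simp
qed

lemma rank_nullity:
  fixes S :: "'a::chilbert set"
  assumes S: "cv.subspace S" and f: "lin_on S f"
  shows "edim S = edim {x\<in>S. f x = 0} + edim (f ` S)"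
proof -
  let ?K = "{x\<in>S. f x = 0}"
  have K: "cv.subspace ?K" by (rule subspace_lin_kernel[OF S f])
  obtain C where C: "is_complement S ?K C" using complement_exists[OF K S] by blast
  have Cs: "cv.subspace C" "C \<subseteq> S" "?K \<inter> C = {0}" "S = ssum ?K C" using C by (auto simp: is_complement_def)
  have linC: "lin_on C f" using f Cs(2) unfolding lin_on_def by blast
  have inj: "inj_on f C"
  proof (rule inj_onI)
    fix x y assume xy: "x \<in> C" "y \<in> C" "f x = f y"
    have "f (x - y) = 0" using lin_on_diff[OF f S, of x y] xy Cs(2) by auto
    moreover have "x - y \<in> C" using xy cv.subspace_diff[OF Cs(1)] by blast
    ultimately have "x - y \<in> ?K \<inter> C" using Cs(2) by blast
    then show "x = y" using Cs(3) by auto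
  qed
  have img: "f ` C = f ` S"
  proof
    show "f ` C \<subseteq> f ` S" using Cs(2) by blast
    show "f ` S \<subseteq> f ` C"
    proof
      fix y assume "y \<in> f ` S"
      then obtain x where x: "x \<in> S" "y = f x" by blast
      then obtain k c where kc: "x = k + c" "k \<in> ?K" "c \<in> C" using Cs(4) by blast
      have "f x = f k + f c" using lin_on_add[OF f] kc Cs(2) by blast
      then show "y \<in> f ` C" using x kc by auto
    qed
  qed
  have "edim S = edim ?K + edim C" using edim_ssum[OF K Cs(1)] Cs(3,4) by simp
  also have "edim C = edim (f ` S)" using edim_lin_image_inj[OF Cs(1) linC inj] img by simp
  finally show ?thesis .
qed

lemma is_complement_ssum:
  fixes W :: "'a::chilbert set"
  assumes W: "cv.subspace W" and S: "cv.subspace S" and R: "cv.subspace R"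
    and RS: "R \<subseteq> S" and SW: "S \<subseteq> W"
    and C: "is_complement W S C" and D: "is_complement S R D"
  shows "is_complement W R (ssum D C)"
proof -
  have Cs: "cv.subspace C" "C \<subseteq> W" "S \<inter> C = {0}" "W = ssum S C" using C unfolding is_complement_def by auto
  have Ds: "cv.subspace D" "D \<subseteq> S" "R \<inter> D = {0}" "S = ssum R D" using D unfolding is_complement_def by auto
  have DCW: "ssum D C \<subseteq> W" using Ds(2) SW Cs(2) cv.subspace_add[OF W] by blast
  have "R \<inter> ssum D C \<subseteq> {0}"
  proof
    fix r assume "r \<in> R \<inter> ssum D C"
    then obtain d c where dc: "r \<in> R" "r = d + c" "d \<in> D" "c \<in> C" by blast
    have "c = r - d" using dc by simp
    moreover have "r - d \<in> S" using cv.subspace_diff[OF S] dc RS Ds(2) by blast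
    ultimately have "c = 0" using Cs(3) dc(4) by blast
    then show "r \<in> {0}" using Ds(3) dc by auto
  qed
  moreover have "W \<subseteq> ssum R (ssum D C)"
  proof
    fix w assume "w \<in> W"
    then obtain s c where sc: "w = s + c" "s \<in> S" "c \<in> C" using Cs(4) by blast
    then obtain r d where rd: "s = r + d" "r \<in> R" "d \<in> D" using Ds(4) by blast
    have "w = r + (d + c)" using sc rd by (simp add: add.assoc)
    then show "w \<in> ssum R (ssum D C)" using rd sc by blast
  qed
  moreover have "ssum R (ssum D C) \<subseteq> W"
    using DCW RS SW cv.subspace_add[OF W] by blast
  ultimately show ?thesis
    unfolding is_complement_def
    using subspace_ssum[OF Ds(1) Cs(1)] DCW cv.subspace_0[OF R] cv.subspace_0[OF subspace_ssum[OF Ds(1) Cs(1)]]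
    by blast
qed

lemma ecodim_tower:
  fixes W :: "'a::chilbert set"
  assumes W: "cv.subspace W" and S: "cv.subspace S" and R: "cv.subspace R"
    and RS: "R \<subseteq> S" and SW: "S \<subseteq> W"
  shows "ecodim W R = ecodim W S + ecodim S R"
proof -
  obtain C where C: "is_complement W S C" using complement_exists[OF S W SW] by blast
  obtain D where D: "is_complement S R D" using complement_exists[OF R S RS] by blast
  have Cs: "cv.subspace C" "S \<inter> C = {0}" and Ds: "cv.subspace D" "D \<subseteq> S"
    using C D unfolding is_complement_def by auto
  have "ecodim W R = edim (ssum D C)"
    by (rule ecodim_eq_edim_complement[OF R W is_complement_ssum[OF W S R RS SW C D]])
  also have "\<dots> = edim D + edim C"
    by (rule edim_ssum[OF Ds(1) Cs(1)]) (use Cs(2) Ds(2) in blast)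
  also have "edim D = ecodim S R" using ecodim_eq_edim_complement[OF R S D] by simp
  also have "edim C = ecodim W S" using ecodim_eq_edim_complement[OF S W C] by simp
  finally show ?thesis by (simp add: add.commute)
qed

context proj_decomp begin

lemma inter_ssum_complements:
  assumes C1: "is_complement W (R \<inter> W) C1" and C2: "is_complement U (P ` R) C2"
  shows "R \<inter> ssum C1 C2 \<subseteq> {0}"
proof
  have C1s: "C1 \<subseteq> W" "(R \<inter> W) \<inter> C1 = {0}" and C2s: "C2 \<subseteq> U" "P ` R \<inter> C2 = {0}"
    using C1 C2 unfolding is_complement_def by auto
  fix r assume "r \<in> R \<inter> ssum C1 C2"
  then obtain c1 c2 where cc: "r \<in> R" "r = c1 + c2" "c1 \<in> C1" "c2 \<in> C2" by blast
  have c: "c1 \<in> W" "c2 \<in> U" using cc C1s(1) C2s(1) by blast+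
  moreover have "c1 \<in> V" "c2 \<in> V" using c WV UV by blast+
  ultimately have "P r = c2"
    using lin_on_add[OF proj_lin, of c1 c2] cc(2) proj_W[of c1] proj_U[of c2] by simp
  then have "c2 = 0" using C2s(2) cc by blast
  then have "c1 \<in> (R \<inter> W) \<inter> C1" using cc c by simp
  then show "r \<in> {0}" using C1s(2) cc \<open>c2 = 0\<close> by auto
qed

lemma subset_ssum_complements:
  assumes R: "cv.subspace R" and RV: "R \<subseteq> V"
    and C1: "is_complement W (R \<inter> W) C1" and C2: "is_complement U (P ` R) C2"
  shows "V \<subseteq> ssum R (ssum C1 C2)"
proof
  have C1s: "W = ssum (R \<inter> W) C1" and C2s: "C2 \<subseteq> U" "U = ssum (P ` R) C2"
    using C1 C2 unfolding is_complement_def by auto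
  fix v assume v: "v \<in> V"
  have "P v \<in> U" using dec[OF v] by blast
  then obtain r c2 where rc: "P v = P r + c2" "r \<in> R" "c2 \<in> C2" using C2s(2) by blast
  have rV: "r \<in> V" "c2 \<in> V" using rc RV C2s(1) UV by blast+
  have wV: "v - r - c2 \<in> V" using cv.subspace_diff[OF V] v rV by blast
  have "P (v - r - c2) = P v - P r - P c2"
    using lin_on_diff[OF proj_lin V] v rV cv.subspace_diff[OF V] by simp
  also have "\<dots> = 0" using rc proj_U[of c2] C2s(1) by auto
  finally have "v - r - c2 \<in> W" using dec[OF wV] by simp
  then obtain w1 c1 where wc: "v - r - c2 = w1 + c1" "w1 \<in> R \<inter> W" "c1 \<in> C1" using C1s by blast
  have "v = (r + w1) + (c1 + c2)" using wc(1) by (simp add: algebra_simps)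
  moreover have "r + w1 \<in> R" using cv.subspace_add[OF R] rc(2) wc(2) by blast
  ultimately show "v \<in> ssum R (ssum C1 C2)" using wc(3) rc(3) by blast
qed

lemma ecodim_split:
  assumes R: "cv.subspace R" and RV: "R \<subseteq> V"
  shows "ecodim V R = ecodim W (R \<inter> W) + ecodim U (P ` R)"
proof -
  have RW: "cv.subspace (R \<inter> W)" using cv.subspace_inter[OF R W] .
  have PR: "cv.subspace (P ` R)" using subspace_lin_image[OF R lin_on_subset[OF proj_lin RV]] .
  have PRU: "P ` R \<subseteq> U" using dec RV by blast
  obtain C1 where C1: "is_complement W (R \<inter> W) C1" using complement_exists[OF RW W] by blast
  obtain C2 where C2: "is_complement U (P ` R) C2" using complement_exists[OF PR U PRU] by blast
  have C1s: "cv.subspace C1" "C1 \<subseteq> W" and C2s: "cv.subspace C2" "C2 \<subseteq> U"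
    using C1 C2 unfolding is_complement_def by auto
  have C12: "cv.subspace (ssum C1 C2)" "ssum C1 C2 \<subseteq> V"
    using subspace_ssum[OF C1s(1) C2s(1)] C1s(2) C2s(2) WV UV cv.subspace_add[OF V] by blast+
  have "is_complement V R (ssum C1 C2)"
    unfolding is_complement_def
    using C12 inter_ssum_complements[OF C1 C2] subset_ssum_complements[OF R RV C1 C2]
      cv.subspace_0[OF R] cv.subspace_0[OF C12(1)] RV cv.subspace_add[OF V]
    by blast
  then have "ecodim V R = edim (ssum C1 C2)" by (rule ecodim_eq_edim_complement[OF R V])
  also have "\<dots> = edim C1 + edim C2"
    by (rule edim_ssum[OF C1s(1) C2s(1)]) (use WU C1s(2) C2s(2) in blast)
  also have "edim C1 = ecodim W (R \<inter> W)" using ecodim_eq_edim_complement[OF RW W C1] by simp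
  also have "edim C2 = ecodim U (P ` R)" using ecodim_eq_edim_complement[OF PR U C2] by simp
  finally show ?thesis .
qed

end

section \<open>Upper triangular block operators\<close>

text \<open>With respect to \<open>V = W \<oplus> U\<close>, an operator \<open>T\<close> leaving \<open>W\<close> invariant is the upper triangular
  block matrix with diagonal entries \<open>T|W\<close> and the compression \<open>T\<^sub>2 = P T|U\<close>.\<close>

locale triangular_block = proj_decomp +
  fixes T :: "'a::chilbert \<Rightarrow> 'a"
  assumes T: "lin_on V T" and TV: "T ` V \<subseteq> V" and TW: "T ` W \<subseteq> W"
begin

abbreviation T\<^sub>2 :: "'a \<Rightarrow> 'a" where "T\<^sub>2 x \<equiv> P (T x)"

definition RW :: "'a set" where "RW = T ` W"
definition NU :: "'a set" where "NU = {u\<in>U. T\<^sub>2 u = 0}"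
definition E :: "'a set" where "E = T ` NU"
definition KU :: "'a set" where "KU = {u\<in>NU. T u \<in> RW}"

lemma T_lin_W: "lin_on W T" using lin_on_subset[OF T WV] .

lemma T_lin_U: "lin_on U T" using lin_on_subset[OF T UV] .

lemma RW_subspace: "cv.subspace RW"
  unfolding RW_def by (rule subspace_lin_image[OF W T_lin_W])

lemma RW_sub_W: "RW \<subseteq> W"
  unfolding RW_def using TW .

lemma T\<^sub>2_lin: "lin_on U T\<^sub>2"
  unfolding lin_on_def
proof (intro conjI ballI allI)
  have TUV: "T u \<in> V" if "u \<in> U" for u using that UV TV by blast
  fix x y assume "x \<in> U" "y \<in> U"
  then show "T\<^sub>2 (x + y) = T\<^sub>2 x + T\<^sub>2 y"
    using lin_on_add[OF T_lin_U] lin_on_add[OF proj_lin] TUV by simp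
next
  have TUV: "T u \<in> V" if "u \<in> U" for u using that UV TV by blast
  fix c x assume "x \<in> U"
  then show "T\<^sub>2 (c *\<^sub>C x) = c *\<^sub>C T\<^sub>2 x"
    using lin_on_scale[OF T_lin_U] lin_on_scale[OF proj_lin] TUV by simp
qed

lemma NU_subspace: "cv.subspace NU"
  unfolding NU_def by (rule subspace_lin_kernel[OF U T\<^sub>2_lin])

lemma NU_sub_U: "NU \<subseteq> U"
  unfolding NU_def by blast

lemma T_NU_sub_W: "u \<in> NU \<Longrightarrow> T u \<in> W"
  unfolding NU_def using dec UV TV by force

lemma E_subspace: "cv.subspace E"
  unfolding E_def by (rule subspace_lin_image[OF NU_subspace lin_on_subset[OF T_lin_U NU_sub_U]])

lemma E_sub_W: "E \<subseteq> W"
  unfolding E_def using T_NU_sub_W by blast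

lemma KU_subspace: "cv.subspace KU"
  unfolding cv.subspace_def
proof (intro conjI ballI allI)
  have TlN: "lin_on NU T" using lin_on_subset[OF T_lin_U NU_sub_U] .
  show "0 \<in> KU"
    unfolding KU_def using cv.subspace_0[OF NU_subspace] lin_on_zero[OF TlN NU_subspace] cv.subspace_0[OF RW_subspace] by simp
  fix x y assume "x \<in> KU" "y \<in> KU"
  then have xy: "x \<in> NU" "y \<in> NU" "T x \<in> RW" "T y \<in> RW" unfolding KU_def by auto
  then show "x + y \<in> KU" unfolding KU_def
    using cv.subspace_add[OF NU_subspace xy(1,2)] cv.subspace_add[OF RW_subspace xy(3,4)] lin_on_add[OF TlN xy(1,2)] by simp
next
  have TlN: "lin_on NU T" using lin_on_subset[OF T_lin_U NU_sub_U] .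
  fix c x assume "x \<in> KU"
  then have x: "x \<in> NU" "T x \<in> RW" unfolding KU_def by auto
  then show "c *\<^sub>C x \<in> KU" unfolding KU_def
    using cv.subspace_scale[OF NU_subspace x(1)] cv.subspace_scale[OF RW_subspace x(2)] lin_on_scale[OF TlN x(1)] by simp
qed

lemma KU_sub_NU: "KU \<subseteq> NU"
  unfolding KU_def by blast

lemma proj_kernel_eq_KU: "P ` kernel V T = KU"
proof
  show "P ` kernel V T \<subseteq> KU"
  proof
    fix y assume "y \<in> P ` kernel V T"
    then obtain v where v: "v \<in> V" "T v = 0" "y = P v" unfolding kernel_def by blast
    obtain w u where wu: "v = w + u" "w \<in> W" "u \<in> U" using v(1) V_eq_ssum by blast
    have Pv: "P v = u" using proj_eqI[OF v(1) wu(3)] wu by simp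
    have wV: "w \<in> V" "u \<in> V" using wu WV UV by blast+
    have "T w + T u = 0" using lin_on_add[OF T wV] wu v by simp
    then have "T u = - T w" by (simp add: eq_neg_iff_add_eq_0 add.commute)
    then have "T u = T (- w)" using lin_on_neg[OF T_lin_W wu(2)] by simp
    then have TuR: "T u \<in> RW" unfolding RW_def using cv.subspace_neg[OF W wu(2)] by blast
    then have "T\<^sub>2 u = 0" using proj_W RW_sub_W by blast
    then show "y \<in> KU" unfolding KU_def NU_def using TuR Pv v wu by simp
  qed
  show "KU \<subseteq> P ` kernel V T"
  proof
    fix u assume u: "u \<in> KU"
    then have uN: "u \<in> U" "T u \<in> RW" unfolding KU_def NU_def by auto
    then obtain w0 where w0: "w0 \<in> W" "T u = T w0" unfolding RW_def by blast
    have uV: "u \<in> V" "w0 \<in> V" using uN w0 UV WV by blast+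
    have "T (u - w0) = 0" using lin_on_diff[OF T V uV] w0 by simp
    moreover have "u - w0 \<in> V" using cv.subspace_diff[OF V uV] .
    moreover have "P (u - w0) = u"
      by (rule proj_eqI) (use uV uN w0 cv.subspace_neg[OF W] cv.subspace_diff[OF V uV] in auto)
    ultimately show "u \<in> P ` kernel V T" unfolding kernel_def by (metis (mono_tags, lifting) image_eqI mem_Collect_eq)
  qed
qed

lemma alpha_V: "alpha V T = alpha W T + edim KU"
proof -
  have K: "cv.subspace (kernel V T)" "kernel V T \<subseteq> V"
    unfolding kernel_def using subspace_lin_kernel[OF V T] by auto
  have "{x \<in> kernel V T. P x = 0} = kernel W T"
    unfolding kernel_def using WV dec proj_W by force
  then show ?thesis
    unfolding alpha_def using rank_nullity[OF K(1) lin_on_subset[OF proj_lin K(2)]] proj_kernel_eq_KU by simp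
qed

lemma proj_image_eq_T\<^sub>2_image: "P ` T ` V = T\<^sub>2 ` U"
proof
  show "P ` T ` V \<subseteq> T\<^sub>2 ` U"
  proof
    fix y assume "y \<in> P ` T ` V"
    then obtain v where v: "v \<in> V" "y = T\<^sub>2 v" by blast
    obtain w u where wu: "v = w + u" "w \<in> W" "u \<in> U" using v(1) V_eq_ssum by blast
    have wV: "w \<in> V" "u \<in> V" using wu WV UV by blast+
    have Tw: "T w \<in> W" "T w \<in> V" "T u \<in> V" using TW wu(2) WV TV wV by blast+
    have "T\<^sub>2 v = P (T w) + T\<^sub>2 u" using lin_on_add[OF T wV] lin_on_add[OF proj_lin Tw(2,3)] wu by simp
    also have "\<dots> = T\<^sub>2 u" using proj_W[OF Tw(1)] by simp
    finally show "y \<in> T\<^sub>2 ` U" using v wu by blast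
  qed
  show "T\<^sub>2 ` U \<subseteq> P ` T ` V" using UV by blast
qed

lemma image_inter_W: "T ` V \<inter> W = ssum RW E"
proof
  show "T ` V \<inter> W \<subseteq> ssum RW E"
  proof
    fix y assume "y \<in> T ` V \<inter> W"
    then obtain v where v: "v \<in> V" "y = T v" "y \<in> W" by blast
    obtain w u where wu: "v = w + u" "w \<in> W" "u \<in> U" using v(1) V_eq_ssum by blast
    have wV: "w \<in> V" "u \<in> V" using wu WV UV by blast+
    have Tw: "T w \<in> W" using TW wu(2) by blast
    have y: "y = T w + T u" using lin_on_add[OF T wV] wu v by simp
    then have "T u \<in> W" using cv.subspace_diff[OF W v(3) Tw] by (simp add: diff_add_cancel[symmetric])
    then have "u \<in> NU" unfolding NU_def using proj_W wu by simp
    then show "y \<in> ssum RW E" using y wu unfolding RW_def E_def by blast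
  qed
  show "ssum RW E \<subseteq> T ` V \<inter> W"
  proof
    fix y assume "y \<in> ssum RW E"
    then obtain w u where wu: "y = T w + T u" "w \<in> W" "u \<in> NU" unfolding RW_def E_def by blast
    have wV: "w \<in> V" "u \<in> V" using wu WV UV NU_sub_U by blast+
    have "y = T (w + u)" using lin_on_add[OF T wV] wu by simp
    moreover have "w + u \<in> V" using cv.subspace_add[OF V wV] .
    moreover have "y \<in> W" using wu TW T_NU_sub_W cv.subspace_add[OF W] by blast
    ultimately show "y \<in> T ` V \<inter> W" by blast
  qed
qed

lemma beta_V: "beta V T = ecodim W (ssum RW E) + beta U T\<^sub>2"
  unfolding beta_def
  using ecodim_split[OF subspace_lin_image[OF V T] TV] proj_image_eq_T\<^sub>2_image image_inter_W by simp

lemma beta_W: "beta W T = ecodim W (ssum RW E) + ecodim (ssum RW E) RW"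
proof -
  have "RW \<subseteq> ssum RW E" using cv.subspace_0[OF E_subspace] by force
  moreover have "ssum RW E \<subseteq> W" using RW_sub_W E_sub_W cv.subspace_add[OF W] by blast
  ultimately show ?thesis
    unfolding beta_def RW_def[symmetric]
    by (rule ecodim_tower[OF W subspace_ssum[OF RW_subspace E_subspace] RW_subspace])
qed

context
  fixes C :: "'a set"
  assumes C: "is_complement NU KU C"
begin

lemma complement_props: "cv.subspace C" "C \<subseteq> NU" "KU \<inter> C = {0}" "NU = ssum KU C" "lin_on C T"
  using C lin_on_subset[OF T_lin_U] NU_sub_U unfolding is_complement_def by auto

lemma alpha_U_eq: "alpha U T\<^sub>2 = edim KU + edim C"
proof -
  have "kernel U T\<^sub>2 = NU" unfolding kernel_def NU_def by simp
  then show ?thesis unfolding alpha_def using edim_ssum[OF KU_subspace complement_props(1)] complement_props(3,4) by simp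
qed

lemma complement_T_RW: "x \<in> C \<Longrightarrow> T x \<in> RW \<Longrightarrow> x = 0"
  using complement_props(2,3) unfolding KU_def by blast

lemma T_inj_on_complement: "inj_on T C"
proof (rule inj_onI)
  fix x y assume xy: "x \<in> C" "y \<in> C" "T x = T y"
  have "T (x - y) = 0" using lin_on_diff[OF complement_props(5,1) xy(1,2)] xy(3) by simp
  then have "x - y = 0"
    using complement_T_RW[OF cv.subspace_diff[OF complement_props(1) xy(1,2)]] cv.subspace_0[OF RW_subspace] by simp
  then show "x = y" by simp
qed

lemma T_image_complement: "is_complement (ssum RW E) RW (T ` C)"
  unfolding is_complement_def
proof (intro conjI)
  show "cv.subspace (T ` C)" by (rule subspace_lin_image[OF complement_props(1,5)])
  show "T ` C \<subseteq> ssum RW E"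
    using complement_props(2) cv.subspace_0[OF RW_subspace] unfolding E_def by force
  show "RW \<inter> T ` C = {0}"
    using complement_T_RW lin_on_zero[OF complement_props(5,1)] cv.subspace_0[OF RW_subspace] cv.subspace_0[OF complement_props(1)]
    by auto
  show "ssum RW E = ssum RW (T ` C)"
  proof
    show "ssum RW E \<subseteq> ssum RW (T ` C)"
    proof
      fix y assume "y \<in> ssum RW E"
      then obtain r u where ru: "y = r + T u" "r \<in> RW" "u \<in> NU" unfolding E_def by blast
      then obtain k c where kc: "u = k + c" "k \<in> KU" "c \<in> C" using complement_props(4) by blast
      have kcN: "k \<in> NU" "c \<in> NU" using kc KU_sub_NU complement_props(2) by blast+
      have "y = (r + T k) + T c"
        using ru lin_on_add[OF lin_on_subset[OF T_lin_U NU_sub_U] kcN] kc by (simp add: add.assoc)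
      moreover have "r + T k \<in> RW" using cv.subspace_add[OF RW_subspace] ru kc unfolding KU_def by blast
      ultimately show "y \<in> ssum RW (T ` C)" using kc by blast
    qed
    show "ssum RW (T ` C) \<subseteq> ssum RW E" unfolding E_def using complement_props(2) by blast
  qed
qed

lemma ecodim_RW_eq: "ecodim (ssum RW E) RW = edim C"
  using ecodim_eq_edim_complement[OF RW_subspace subspace_ssum[OF RW_subspace E_subspace] T_image_complement]
    edim_lin_image_inj[OF complement_props(1,5) T_inj_on_complement] by simp

end

lemma nullity_defect_relations:
  obtains k c r where "alpha V T = alpha W T + k" "beta V T = c + beta U T\<^sub>2"
    "beta W T = c + r" "alpha U T\<^sub>2 = k + r"
proof -
  obtain C where C: "is_complement NU KU C"
    using complement_exists[OF KU_subspace NU_subspace KU_sub_NU] by blast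
  show thesis
    using that[of "edim KU" "ecodim W (ssum RW E)" "edim C"] alpha_V beta_V beta_W
      alpha_U_eq[OF C] ecodim_RW_eq[OF C] by simp
qed

lemma index_additivity: "alpha V T + beta W T + beta U T\<^sub>2 = alpha W T + alpha U T\<^sub>2 + beta V T"
  by (rule nullity_defect_relations) (simp add: ac_simps)

lemma beta_U_le: "beta U T\<^sub>2 \<le> beta V T"
  by (rule nullity_defect_relations) (simp add: le_iff_add add.commute)

lemma beta_V_le: "beta V T \<le> beta W T + beta U T\<^sub>2"
  by (rule nullity_defect_relations) (simp add: add_right_mono le_iff_add)

lemma beta_V_infinite: "alpha U T\<^sub>2 < \<infinity> \<Longrightarrow> beta W T = \<infinity> \<Longrightarrow> beta V T = \<infinity>"
  by (rule nullity_defect_relations) (auto simp: plus_eq_infty_iff_enat)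

end

section \<open>Orthogonal complements in complex Hilbert spaces\<close>

lemma cinner_add_right: "cinner x (y + z) = cinner x y + cinner x z"
  by (metis cinner_conj cinner_add_left complex_cnj_add)

lemma cinner_scaleC_right: "cinner x (c *\<^sub>C y) = c * cinner x y"
  by (metis cinner_conj cinner_scaleC_left complex_cnj_cnj complex_cnj_mult)

lemma cinner_zero_right: "cinner x 0 = 0"
  using cinner_add_right[of x 0 0] by simp

lemma cinner_zero_left: "cinner 0 x = 0"
  using cinner_add_left[of 0 0 x] by simp

lemma cinner_minus_left: "cinner (- x) y = - cinner x y"
  using cinner_add_left[of x "-x" y] cinner_zero_left[of y] by (simp add: eq_neg_iff_add_eq_0 add.commute)

lemma cinner_minus_right: "cinner x (- y) = - cinner x y"
  using cinner_add_right[of x y "-y"] cinner_zero_right[of x] by (simp add: eq_neg_iff_add_eq_0 add.commute)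

lemma cinner_diff_left: "cinner (x - y) z = cinner x z - cinner y z"
  using cinner_add_left[of x "-y" z] cinner_minus_left by simp

lemma cinner_diff_right: "cinner x (y - z) = cinner x y - cinner x z"
  using cinner_add_right[of x y "-z"] cinner_minus_right by simp

lemma Re_cinner_sym: "Re (cinner y x) = Re (cinner x y)"
  by (subst cinner_conj) simp

lemma norm_diff_sq: "(norm (w - v))\<^sup>2 = (norm w)\<^sup>2 + (norm v)\<^sup>2 - 2 * Re (cinner w v)"
proof -
  have "complex_of_real ((norm (w - v))\<^sup>2) = cinner (w - v) (w - v)" by (simp add: cinner_norm)
  also have "\<dots> = cinner w w - cinner w v - cinner v w + cinner v v"
    by (simp add: cinner_diff_left cinner_diff_right)
  finally have "(norm (w - v))\<^sup>2 = Re (cinner w w) - Re (cinner w v) - Re (cinner v w) + Re (cinner v v)"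
    by (metis Re_complex_of_real minus_complex.sel(1) plus_complex.sel(1))
  then show ?thesis using Re_cinner_sym[of v w] by (simp add: cinner_norm)
qed

lemma norm_add_sq: "(norm (w + v))\<^sup>2 = (norm w)\<^sup>2 + (norm v)\<^sup>2 + 2 * Re (cinner w v)"
  using norm_diff_sq[of w "-v"] by (simp add: cinner_minus_right)

lemma norm_scaleC: "norm (c *\<^sub>C x) = cmod c * norm x"
proof -
  have "complex_of_real ((norm (c *\<^sub>C x))\<^sup>2) = cnj c * (c * cinner x x)"
    by (simp only: cinner_norm[symmetric] cinner_scaleC_left cinner_scaleC_right mult.left_commute)
  also have "\<dots> = (c * cnj c) * cinner x x" by (simp add: ac_simps)
  also have "c * cnj c = complex_of_real ((cmod c)\<^sup>2)" by (rule complex_norm_square[symmetric])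
  also have "complex_of_real ((cmod c)\<^sup>2) * cinner x x = complex_of_real ((cmod c)\<^sup>2 * (norm x)\<^sup>2)"
    by (simp add: cinner_norm)
  finally have "(norm (c *\<^sub>C x))\<^sup>2 = (cmod c)\<^sup>2 * (norm x)\<^sup>2" by (simp only: of_real_eq_iff)
  then have "(norm (c *\<^sub>C x))\<^sup>2 = (cmod c * norm x)\<^sup>2" by (simp add: power_mult_distrib)
  then show ?thesis by (simp add: power2_eq_iff_nonneg)
qed

lemma cinner_self_eq_0: "cinner x x = 0 \<longleftrightarrow> x = 0"
  by (simp add: cinner_norm)

lemma scaleR_in_subspace: "cv.subspace N \<Longrightarrow> x \<in> N \<Longrightarrow> scaleR r x \<in> N"
  by (simp add: scaleR_scaleC cv.subspace_scale)

lemma approx_infdist: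
  assumes "A \<noteq> {}" "e > 0"
  shows "\<exists>y\<in>A. dist x y < infdist x A + e"
proof -
  have "(INF a\<in>A. dist x a) < infdist x A + e" using assms by (simp add: infdist_notempty)
  then show ?thesis using cINF_less_iff[OF assms(1) bdd_below_image_dist, of x] by blast
qed

lemma parallelogram: "(norm (a + b))\<^sup>2 + (norm (a - b))\<^sup>2 = 2 * (norm a)\<^sup>2 + 2 * (norm (b::'a::chilbert))\<^sup>2"
  using norm_add_sq[of a b] norm_diff_sq[of a b] by simp

lemma near_points_dist_sq:
  fixes x :: "'a::chilbert"
  assumes N: "cv.subspace N" and d0: "0 \<le> d" and dle: "\<And>z. z \<in> N \<Longrightarrow> d \<le> norm (x - z)"
    and a: "a \<in> N" and b: "b \<in> N"
  shows "(norm (a - b))\<^sup>2 \<le> 2 * (norm (x - a))\<^sup>2 + 2 * (norm (x - b))\<^sup>2 - 4 * d\<^sup>2"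
proof -
  define z where "z = scaleR (1/2) (a + b)"
  have zN: "z \<in> N" unfolding z_def using scaleR_in_subspace[OF N] cv.subspace_add[OF N a b] by blast
  have "(x - a) + (x - b) = scaleR 2 (x - z)" unfolding z_def by (simp add: algebra_simps scaleR_2)
  then have "norm ((x - a) + (x - b)) = 2 * norm (x - z)" by simp
  then have "(norm ((x - a) + (x - b)))\<^sup>2 \<ge> 4 * d\<^sup>2"
    using dle[OF zN] d0 by (simp add: power_mono power_mult_distrib)
  moreover have "norm ((x - a) - (x - b)) = norm (a - b)" by (simp add: norm_minus_commute)
  ultimately show ?thesis using parallelogram[of "x - a" "x - b"] by simp
qed

lemma minimizing_sequence_Cauchy:
  fixes x :: "'a::chilbert"
  assumes N: "cv.subspace N" and d0: "0 \<le> d" and dle: "\<And>z. z \<in> N \<Longrightarrow> d \<le> norm (x - z)"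
    and y: "\<And>m. y m \<in> N" "\<And>m. norm (x - y m) < d + inverse (real (Suc m))"
  shows "Cauchy y"
proof -
  define \<delta> where "\<delta> m = inverse (real (Suc m))" for m
  have \<delta>pos: "0 < \<delta> m" for m unfolding \<delta>_def by simp
  have \<delta>le1: "\<delta> m \<le> 1" for m unfolding \<delta>_def by (simp add: inverse_le_1_iff)
  note y = y[folded \<delta>_def]
  have sq: "(norm (x - y m))\<^sup>2 \<le> d\<^sup>2 + (2 * d + 1) * \<delta> m" for m
  proof -
    have "(norm (x - y m))\<^sup>2 \<le> (d + \<delta> m)\<^sup>2"
      using y(2)[of m] by (simp add: power_mono less_imp_le)
    also have "\<dots> = d\<^sup>2 + 2 * d * \<delta> m + \<delta> m * \<delta> m" by (simp add: power2_eq_square algebra_simps)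
    also have "\<delta> m * \<delta> m \<le> \<delta> m" using \<delta>le1[of m] \<delta>pos[of m] by (simp add: mult_le_cancel_right1)
    finally show ?thesis by (simp add: algebra_simps)
  qed
  have bound: "(norm (y m - y k))\<^sup>2 \<le> 2 * (2 * d + 1) * (\<delta> m + \<delta> k)" for m k
    using near_points_dist_sq[OF N d0 dle y(1) y(1), of m k] sq[of m] sq[of k] by (simp add: algebra_simps)
  show ?thesis
  proof (rule CauchyI)
    fix e :: real assume e: "0 < e"
    have c: "0 < e\<^sup>2 / (4 * (2 * d + 1))" using e d0 by simp
    have "\<delta> \<longlonglongrightarrow> 0" unfolding \<delta>_def by (rule LIMSEQ_inverse_real_of_nat)
    then have "eventually (\<lambda>m. \<delta> m < e\<^sup>2 / (4 * (2 * d + 1))) sequentially"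
      using order_tendstoD(2)[OF _ c] by blast
    then obtain M where M: "\<And>m. m \<ge> M \<Longrightarrow> \<delta> m < e\<^sup>2 / (4 * (2 * d + 1))"
      unfolding eventually_sequentially by blast
    show "\<exists>M. \<forall>m\<ge>M. \<forall>n\<ge>M. norm (y m - y n) < e"
    proof (intro exI allI impI)
      fix m n assume mn: "M \<le> m" "M \<le> n"
      have "(norm (y m - y n))\<^sup>2 \<le> 2 * (2 * d + 1) * (\<delta> m + \<delta> n)" by (rule bound)
      also have "\<dots> < 2 * (2 * d + 1) * (e\<^sup>2 / (4 * (2 * d + 1)) + e\<^sup>2 / (4 * (2 * d + 1)))"
        using M[OF mn(1)] M[OF mn(2)] d0 by (intro mult_strict_left_mono add_strict_mono) auto
      also have "\<dots> = e\<^sup>2"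
      proof -
        have g: "\<And>c::real. c > 0 \<Longrightarrow> 2 * c * (e\<^sup>2 / (4 * c) + e\<^sup>2 / (4 * c)) = e\<^sup>2"
          by (simp add: field_simps)
        show ?thesis using g[of "2 * d + 1"] d0 by simp
      qed
      finally show "norm (y m - y n) < e" using e by (simp add: power_less_imp_less_base)
    qed
  qed
qed

lemma nearest_point_exists:
  fixes x :: "'a::chilbert"
  assumes N: "cv.subspace N" and cl: "closed N"
  obtains l where "l \<in> N" "\<And>z. z \<in> N \<Longrightarrow> norm (x - l) \<le> norm (x - z)"
proof -
  define d where "d = infdist x N"
  have Nne: "N \<noteq> {}" using cv.subspace_0[OF N] by blast
  have d0: "0 \<le> d" unfolding d_def by (rule infdist_nonneg)
  have dle: "d \<le> norm (x - z)" if "z \<in> N" for z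
    using infdist_le[OF that, of x] unfolding d_def by (simp add: dist_norm)
  have "\<forall>m. \<exists>y\<in>N. dist x y < d + inverse (real (Suc m))"
    using approx_infdist[OF Nne] unfolding d_def by simp
  then obtain y where y: "\<And>m. y m \<in> N" "\<And>m. norm (x - y m) < d + inverse (real (Suc m))"
    by (metis dist_norm)
  obtain l where l: "y \<longlonglongrightarrow> l"
    using minimizing_sequence_Cauchy[OF N d0 dle y] Cauchy_convergent_iff convergent_def by blast
  have lN: "l \<in> N" using closed_sequentially[OF cl y(1) l] .
  have "norm (x - l) \<le> d"
  proof (rule LIMSEQ_le)
    show "(\<lambda>m. norm (x - y m)) \<longlonglongrightarrow> norm (x - l)" by (intro tendsto_intros l)
    show "(\<lambda>m. d + inverse (real (Suc m))) \<longlonglongrightarrow> d"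
      using tendsto_add[OF tendsto_const LIMSEQ_inverse_real_of_nat, of d] by simp
    show "\<exists>N. \<forall>n\<ge>N. norm (x - y n) \<le> d + inverse (real (Suc n))" using y(2) less_imp_le by blast
  qed
  then show thesis using that[OF lN] dle by force
qed

text \<open>Variational characterisation: perturbing \<open>l\<close> by a small multiple of \<open>z\<close> cannot decrease the distance.\<close>

lemma nearest_point_orthogonal:
  fixes x :: "'a::chilbert"
  assumes N: "cv.subspace N" and lN: "l \<in> N" and nearest: "\<And>z. z \<in> N \<Longrightarrow> norm (x - l) \<le> norm (x - z)"
    and zN: "z \<in> N"
  shows "cinner z (x - l) = 0"
proof -
  define w where "w = x - l"
  define a where "a = cinner w z"
  define \<epsilon> where "\<epsilon> = 1 / ((norm z)\<^sup>2 + 1)"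
  define v where "v = (complex_of_real \<epsilon> * cnj a) *\<^sub>C z"
  have \<epsilon>pos: "0 < \<epsilon>" unfolding \<epsilon>_def by (simp add: add_nonneg_pos)
  have \<epsilon>z: "\<epsilon> * (norm z)\<^sup>2 < 1"
    unfolding \<epsilon>_def by (simp add: divide_less_eq add_nonneg_pos)
  have vN: "l + v \<in> N" unfolding v_def using cv.subspace_add[OF N lN cv.subspace_scale[OF N zN]] .
  have "norm w \<le> norm (w - v)"
    using nearest[OF vN] unfolding w_def by (simp add: diff_diff_eq)
  then have "(norm w)\<^sup>2 \<le> (norm (w - v))\<^sup>2" by (simp add: power_mono)
  also have "\<dots> = (norm w)\<^sup>2 + (norm v)\<^sup>2 - 2 * Re (cinner w v)" by (rule norm_diff_sq)
  finally have ineq: "2 * Re (cinner w v) \<le> (norm v)\<^sup>2" by simp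
  have nv: "(norm v)\<^sup>2 = \<epsilon>\<^sup>2 * (cmod a)\<^sup>2 * (norm z)\<^sup>2"
    unfolding v_def using \<epsilon>pos by (simp add: norm_scaleC norm_mult power_mult_distrib)
  have "cinner w v = complex_of_real \<epsilon> * (cnj a * a)"
    unfolding v_def a_def by (simp add: cinner_scaleC_right mult.assoc)
  also have "cnj a * a = complex_of_real ((cmod a)\<^sup>2)" using complex_norm_square[of a] by (simp only: mult.commute)
  finally have "Re (cinner w v) = \<epsilon> * (cmod a)\<^sup>2" by simp
  then have "2 * (\<epsilon> * (cmod a)\<^sup>2) \<le> \<epsilon>\<^sup>2 * (cmod a)\<^sup>2 * (norm z)\<^sup>2" using ineq nv by simp
  then have "2 * (cmod a)\<^sup>2 \<le> \<epsilon> * (norm z)\<^sup>2 * (cmod a)\<^sup>2"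
    using \<epsilon>pos by (simp add: power2_eq_square mult_le_cancel_left_pos algebra_simps)
  also have "\<dots> \<le> 1 * (cmod a)\<^sup>2" using \<epsilon>z by (intro mult_right_mono) auto
  finally have "a = 0" by simp
  then show ?thesis unfolding a_def w_def by (subst cinner_conj) simp
qed

lemma bop_lin: "bop V W T \<Longrightarrow> lin_on V T"
  unfolding bop_def lin_on_def by blast

lemma bop_maps: "bop V W T \<Longrightarrow> x \<in> V \<Longrightarrow> T x \<in> W"
  unfolding bop_def by blast

text \<open>By polarisation, the real and imaginary parts of \<open>cinner z x\<close> are continuous functions of norms.\<close>

lemma closed_orth: "closed {x::'a::chilbert. cinner z x = 0}"
proof -
  define f1 where "f1 x = ((norm (z + x))\<^sup>2 - (norm z)\<^sup>2 - (norm x)\<^sup>2) / 2" for x :: 'a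
  define f2 where "f2 x = ((norm (\<i> *\<^sub>C z + x))\<^sup>2 - (norm (\<i> *\<^sub>C z))\<^sup>2 - (norm x)\<^sup>2) / 2" for x :: 'a
  have r1: "Re (cinner z x) = f1 x" for x unfolding f1_def using norm_add_sq[of z x] by simp
  have r2: "Im (cinner z x) = f2 x" for x
  proof -
    have "Re (cinner (\<i> *\<^sub>C z) x) = f2 x" unfolding f2_def using norm_add_sq[of "\<i> *\<^sub>C z" x] by simp
    moreover have "cinner (\<i> *\<^sub>C z) x = - \<i> * cinner z x" by (simp add: cinner_scaleC_left)
    ultimately show ?thesis by simp
  qed
  have "{x. cinner z x = 0} = {x. f1 x = 0} \<inter> {x. f2 x = 0}"
    using r1 r2 by (auto simp: complex_eq_iff)
  moreover have "closed {x. f1 x = 0}" unfolding f1_def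
    by (rule closed_Collect_eq) (auto intro!: continuous_intros)
  moreover have "closed {x. f2 x = 0}" unfolding f2_def
    by (rule closed_Collect_eq) (auto intro!: continuous_intros)
  ultimately show ?thesis by (metis closed_Int)
qed

definition orth_compl :: "'a::chilbert set \<Rightarrow> 'a set \<Rightarrow> 'a set" where
  "orth_compl V N = {x\<in>V. \<forall>z\<in>N. cinner z x = 0}"

lemma closed_orth_compl: "closed V \<Longrightarrow> closed (orth_compl V N)"
proof -
  assume "closed V"
  moreover have "orth_compl V N = V \<inter> (\<Inter>z\<in>N. {x. cinner z x = 0})" unfolding orth_compl_def by auto
  ultimately show ?thesis using closed_orth by (metis closed_INT closed_Int)
qed

lemma subspace_orth_compl: "cv.subspace V \<Longrightarrow> cv.subspace (orth_compl V N)"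
  unfolding cv.subspace_def orth_compl_def
  by (simp add: cinner_zero_right cinner_add_right cinner_scaleC_right)

lemma inter_orth_compl: "N \<inter> orth_compl V N \<subseteq> {0}"
  unfolding orth_compl_def by (auto simp: cinner_self_eq_0)

lemma closed_subspace_complemented:
  fixes V :: "'a::chilbert set"
  assumes V: "cv.subspace V" "closed V" and N: "cv.subspace N" "closed N" and NV: "N \<subseteq> V"
  shows "complemented V N"
proof -
  let ?M = "orth_compl V N"
  have MV: "?M \<subseteq> V" unfolding orth_compl_def by blast
  have "V \<subseteq> ssum N ?M"
  proof
    fix x assume x: "x \<in> V"
    obtain l where "l \<in> N" "\<And>z. z \<in> N \<Longrightarrow> norm (x - l) \<le> norm (x - z)"
      using nearest_point_exists[OF N] by blast
    then have l: "l \<in> N" "\<forall>z\<in>N. cinner z (x - l) = 0"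
      using nearest_point_orthogonal[OF N(1)] by blast+
    have "x - l \<in> V" using cv.subspace_diff[OF V(1) x] l NV by blast
    then have "x - l \<in> ?M" unfolding orth_compl_def using l by blast
    moreover have "x = l + (x - l)" by simp
    ultimately show "x \<in> ssum N ?M" using l by blast
  qed
  moreover have "ssum N ?M \<subseteq> V" using NV MV cv.subspace_add[OF V(1)] by blast
  moreover have "{0} \<subseteq> N \<inter> ?M" using cv.subspace_0[OF N(1)] cv.subspace_0[OF subspace_orth_compl[OF V(1)]] by blast
  ultimately show ?thesis
    unfolding complemented_def csubspace_iff_subspace
    using subspace_orth_compl[OF V(1)] closed_orth_compl[OF V(2)] MV inter_orth_compl[of N V]
    by (intro exI[of _ ?M]) blast
qed

lemma bop_continuous:
  assumes V: "cv.subspace V" and T: "bop V W T"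
  shows "continuous_on V T"
proof -
  obtain K where K: "\<forall>x\<in>V. norm (T x) \<le> K * norm x" using T unfolding bop_def by blast
  have "(max K 0)-lipschitz_on V T"
  proof (rule lipschitz_onI)
    fix x y assume xy: "x \<in> V" "y \<in> V"
    have "T x - T y = T (x - y)" using lin_on_diff[OF bop_lin[OF T] V xy] by simp
    then have "dist (T x) (T y) = norm (T (x - y))" by (simp add: dist_norm)
    also have "\<dots> \<le> K * norm (x - y)" using K cv.subspace_diff[OF V xy] by blast
    also have "\<dots> \<le> max K 0 * norm (x - y)" by (intro mult_right_mono) auto
    finally show "dist (T x) (T y) \<le> max K 0 * dist x y" by (simp add: dist_norm)
  qed simp
  then show ?thesis by (rule lipschitz_on_continuous_on)
qed

lemma kernel_closed:
  assumes V: "cv.subspace V" "closed V" and T: "bop V W T"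
  shows "closed (kernel V T)"
  unfolding kernel_def by (rule continuous_closed_preimage_constant[OF bop_continuous[OF V(1) T] V(2)])

lemma kernel_complemented:
  assumes V: "cv.subspace V" "closed V" and T: "bop V W T"
  shows "complemented V (kernel V T)"
proof (rule closed_subspace_complemented[OF V])
  show "cv.subspace (kernel V T)" unfolding kernel_def by (rule subspace_lin_kernel[OF V(1) bop_lin[OF T]])
  show "closed (kernel V T)" by (rule kernel_closed[OF V T])
  show "kernel V T \<subseteq> V" unfolding kernel_def by blast
qed

lemma bop_bound_nonneg:
  assumes "bop V W T" shows "\<exists>K\<ge>0. \<forall>x\<in>V. norm (T x) \<le> K * norm x"
proof -
  obtain K where K: "\<forall>x\<in>V. norm (T x) \<le> K * norm x" using assms unfolding bop_def by blast
  have "\<forall>x\<in>V. norm (T x) \<le> max K 0 * norm x"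
  proof
    fix x assume "x \<in> V"
    then have "norm (T x) \<le> K * norm x" using K by blast
    also have "\<dots> \<le> max K 0 * norm x" by (intro mult_right_mono) auto
    finally show "norm (T x) \<le> max K 0 * norm x" .
  qed
  then show ?thesis by (intro exI[of _ "max K 0"]) auto
qed

lemma bop_lminus:
  assumes V: "cv.subspace V" and T: "bop V V T"
  shows "bop V V (lminus l T)"
proof -
  obtain K where K: "K \<ge> 0" "\<forall>x\<in>V. norm (T x) \<le> K * norm x" using bop_bound_nonneg[OF T] by blast
  have TV: "T x \<in> V" if "x \<in> V" for x using bop_maps[OF T that] .
  show ?thesis unfolding bop_def lminus_def
  proof (intro conjI ballI allI)
    fix x assume x: "x \<in> V"
    show "l *\<^sub>C x - T x \<in> V" using cv.subspace_diff[OF V cv.subspace_scale[OF V x] TV[OF x]] .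
  next
    fix x y assume xy: "x \<in> V" "y \<in> V"
    show "l *\<^sub>C (x + y) - T (x + y) = l *\<^sub>C x - T x + (l *\<^sub>C y - T y)"
      using lin_on_add[OF bop_lin[OF T] xy] by (simp add: cv.scale_right_distrib algebra_simps)
  next
    fix c x assume x: "x \<in> V"
    show "l *\<^sub>C (c *\<^sub>C x) - T (c *\<^sub>C x) = c *\<^sub>C (l *\<^sub>C x - T x)"
      using lin_on_scale[OF bop_lin[OF T] x] cv.scale_left_commute[of l c x]
      by (simp add: cv.scale_right_diff_distrib)
  next
    show "\<exists>K'. \<forall>x\<in>V. norm (l *\<^sub>C x - T x) \<le> K' * norm x"
    proof (intro exI ballI)
      fix x assume x: "x \<in> V"
      have "norm (l *\<^sub>C x - T x) \<le> norm (l *\<^sub>C x) + norm (T x)" by (rule norm_triangle_ineq4)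
      also have "\<dots> \<le> cmod l * norm x + K * norm x" using K x by (simp add: norm_scaleC)
      finally show "norm (l *\<^sub>C x - T x) \<le> (cmod l + K) * norm x" by (simp add: algebra_simps)
    qed
  qed
qed

section \<open>Upper triangular operator matrices on an orthogonal sum\<close>

lemma cinner_sum_right: "cinner x (\<Sum>k\<in>K. f k) = (\<Sum>k\<in>K. cinner x (f k))"
  by (induction K rule: infinite_finite_induct) (auto simp: cinner_zero_right cinner_add_right)

locale orthogonal_decomposition =
  fixes n :: nat and X :: "nat \<Rightarrow> 'a::chilbert set"
  assumes od: "orth_decomp n X"
begin

lemma X_subspace: "k \<in> {1..n} \<Longrightarrow> cv.subspace (X k)"
  using od unfolding orth_decomp_def by (simp add: csubspace_iff_subspace)

lemma X_closed: "k \<in> {1..n} \<Longrightarrow> closed (X k)"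
  using od unfolding orth_decomp_def by simp

lemma X_orthogonal: "i \<in> {1..n} \<Longrightarrow> j \<in> {1..n} \<Longrightarrow> i \<noteq> j \<Longrightarrow> x \<in> X i \<Longrightarrow> y \<in> X j \<Longrightarrow> cinner x y = 0"
  using od unfolding orth_decomp_def by blast

lemma X_decomposition: "\<exists>x. (\<forall>k\<in>{1..n}. x k \<in> X k) \<and> z = (\<Sum>k=1..n. x k)"
proof -
  have "z \<in> {(\<Sum>k=1..n. x k) | x. \<forall>k\<in>{1..n}. x k \<in> X k}" using od unfolding orth_decomp_def by blast
  then show ?thesis by blast
qed

lemma decomposition_unique:
  assumes x: "\<forall>k\<in>{1..n}. x k \<in> X k" and y: "\<forall>k\<in>{1..n}. y k \<in> X k"
    and eq: "(\<Sum>k=1..n. x k) = (\<Sum>k=1..n. y k)" and j: "j \<in> {1..n}"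
  shows "x j = y j"
proof -
  define d where "d k = x k - y k" for k
  have dX: "d k \<in> X k" if "k \<in> {1..n}" for k unfolding d_def using cv.subspace_diff[OF X_subspace[OF that]] x y that by blast
  have s0: "(\<Sum>k=1..n. d k) = 0" unfolding d_def using eq by (simp add: sum_subtractf)
  have "cinner (d j) (\<Sum>k=1..n. d k) = (\<Sum>k=1..n. cinner (d j) (d k))" by (rule cinner_sum_right)
  also have "\<dots> = cinner (d j) (d j) + (\<Sum>k\<in>{1..n} - {j}. cinner (d j) (d k))"
    using j by (simp add: sum.remove)
  also have "(\<Sum>k\<in>{1..n} - {j}. cinner (d j) (d k)) = 0"
    by (rule sum.neutral) (use X_orthogonal dX j in blast)
  finally have "cinner (d j) (d j) = 0" using s0 by (simp add: cinner_zero_right)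
  then show ?thesis unfolding d_def by (simp add: cinner_self_eq_0)
qed

lemma comp_eq:
  assumes x: "\<forall>j\<in>{1..n}. x j \<in> X j" and z: "z = (\<Sum>j=1..n. x j)" and k: "k \<in> {1..n}"
  shows "comp n X k z = x k"
  unfolding comp_def
proof (rule the_equality)
  show "\<exists>x'. (\<forall>j\<in>{1..n}. x' j \<in> X j) \<and> z = (\<Sum>j=1..n. x' j) \<and> x k = x' k" using x z by blast
  fix y assume "\<exists>x'. (\<forall>j\<in>{1..n}. x' j \<in> X j) \<and> z = (\<Sum>j=1..n. x' j) \<and> y = x' k"
  then obtain x' where x': "\<forall>j\<in>{1..n}. x' j \<in> X j" "z = (\<Sum>j=1..n. x' j)" "y = x' k" by blast
  show "y = x k" using decomposition_unique[OF x' (1) x _ k] x'(2,3) z by simp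
qed

lemma comp_mem: "k \<in> {1..n} \<Longrightarrow> comp n X k z \<in> X k"
  using X_decomposition[of z] comp_eq by metis

lemma comp_sum: "z = (\<Sum>k=1..n. comp n X k z)"
proof -
  obtain x where x: "\<forall>k\<in>{1..n}. x k \<in> X k" "z = (\<Sum>k=1..n. x k)" using X_decomposition by blast
  have "(\<Sum>k=1..n. comp n X k z) = (\<Sum>k=1..n. x k)" using comp_eq[OF x] by (intro sum.cong) auto
  then show ?thesis using x by simp
qed

lemma comp_add: "k \<in> {1..n} \<Longrightarrow> comp n X k (z + w) = comp n X k z + comp n X k w"
proof -
  assume k: "k \<in> {1..n}"
  have m: "\<forall>j\<in>{1..n}. comp n X j z + comp n X j w \<in> X j"
    using comp_mem cv.subspace_add[OF X_subspace] by blast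
  have "z + w = (\<Sum>j=1..n. comp n X j z + comp n X j w)"
    using comp_sum[of z] comp_sum[of w] by (simp add: sum.distrib)
  then show ?thesis using comp_eq[OF m _ k] by simp
qed

lemma comp_scale: "k \<in> {1..n} \<Longrightarrow> comp n X k (c *\<^sub>C z) = c *\<^sub>C comp n X k z"
proof -
  assume k: "k \<in> {1..n}"
  have m: "\<forall>j\<in>{1..n}. c *\<^sub>C comp n X j z \<in> X j"
    using comp_mem cv.subspace_scale[OF X_subspace] by blast
  have "c *\<^sub>C z = (\<Sum>j=1..n. c *\<^sub>C comp n X j z)"
    using comp_sum[of z] cv.scale_sum_right by metis
  then show ?thesis using comp_eq[OF m _ k] by simp
qed

lemma comp_lin: "k \<in> {1..n} \<Longrightarrow> lin_on UNIV (comp n X k)"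
  unfolding lin_on_def using comp_add comp_scale by blast

lemma comp_zero: "k \<in> {1..n} \<Longrightarrow> comp n X k 0 = 0"
  using lin_on_zero[OF comp_lin] by simp

lemma comp_diff: "k \<in> {1..n} \<Longrightarrow> comp n X k (z - w) = comp n X k z - comp n X k w"
  using lin_on_diff[OF comp_lin] by simp

lemma comp_single:
  assumes x: "x \<in> X j" and j: "j \<in> {1..n}" and k: "k \<in> {1..n}"
  shows "comp n X k x = (if k = j then x else 0)"
proof -
  define e where "e i = (if i = j then x else 0)" for i
  have m: "\<forall>i\<in>{1..n}. e i \<in> X i" unfolding e_def using x cv.subspace_0[OF X_subspace] by auto
  have "x = (\<Sum>i=1..n. e i)" unfolding e_def using j by (simp add: sum.delta)
  then show ?thesis using comp_eq[OF m _ k] unfolding e_def by simp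
qed

lemma comp_norm: assumes k: "k \<in> {1..n}" shows "norm (comp n X k z) \<le> norm z"
proof -
  define c where "c = comp n X k z"
  define r where "r = (\<Sum>i\<in>{1..n} - {k}. comp n X i z)"
  have zcr: "z = c + r" unfolding c_def r_def using comp_sum[of z] k by (simp add: sum.remove)
  have cX: "c \<in> X k" unfolding c_def by (rule comp_mem[OF k])
  have orth: "cinner c (comp n X i z) = 0" if i: "i \<in> {1..n} - {k}" for i
  proof -
    have i1: "i \<in> {1..n}" "k \<noteq> i" using i by auto
    show ?thesis by (rule X_orthogonal[OF k i1(1) i1(2) cX comp_mem[OF i1(1)]])
  qed
  have "cinner c r = (\<Sum>i\<in>{1..n} - {k}. cinner c (comp n X i z))" unfolding r_def by (rule cinner_sum_right)
  also have "\<dots> = 0" by (intro sum.neutral ballI orth)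
  finally have cr: "cinner c r = 0" .
  have "(norm z)\<^sup>2 = (norm (c + r))\<^sup>2" using zcr by (rule arg_cong)
  also have "\<dots> = (norm c)\<^sup>2 + (norm r)\<^sup>2" using norm_add_sq[of c r] cr by simp
  finally have "(norm c)\<^sup>2 \<le> (norm z)\<^sup>2" by simp
  then have "norm c \<le> norm z" by (rule power2_le_imp_le) simp
  then show ?thesis unfolding c_def .
qed

end

locale triangular_operator_matrix = orthogonal_decomposition n X for n :: nat and X :: "nat \<Rightarrow> 'a::chilbert set" +
  fixes D :: "nat \<Rightarrow> 'a \<Rightarrow> 'a" and A :: "nat \<Rightarrow> nat \<Rightarrow> 'a \<Rightarrow> 'a"
  assumes Dbop: "\<forall>k\<in>{1..n}. bop (X k) (X k) (D k)"
    and Abop: "\<forall>i j. 1 \<le> i \<and> i < j \<and> j \<le> n \<longrightarrow> bop (X j) (X i) (A i j)"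
begin

abbreviation S :: "complex \<Rightarrow> 'a \<Rightarrow> 'a" where "S l \<equiv> lminus l (Tmat n X D A)"

definition row :: "nat \<Rightarrow> 'a \<Rightarrow> 'a" where
  "row i z = D i (comp n X i z) + (\<Sum>j\<in>{i+1..n}. A i j (comp n X j z))"

lemma Tmat_eq_sum_row: "Tmat n X D A z = (\<Sum>i=1..n. row i z)"
  unfolding Tmat_def row_def by simp

lemma A_bop: "i \<in> {1..n} \<Longrightarrow> j \<in> {i+1..n} \<Longrightarrow> bop (X j) (X i) (A i j)"
  using Abop by auto

lemma upper_index_range: "i \<in> {1..n} \<Longrightarrow> j \<in> {i+1..n} \<Longrightarrow> j \<in> {1..n}" by auto

lemma row_mem: assumes i: "i \<in> {1..n}" shows "row i z \<in> X i"
proof -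
  have "D i (comp n X i z) \<in> X i" using bop_maps[OF bspec[OF Dbop i] comp_mem[OF i]] .
  moreover have "(\<Sum>j\<in>{i+1..n}. A i j (comp n X j z)) \<in> X i"
  proof (rule cv.subspace_sum[OF X_subspace[OF i]])
    fix j assume j: "j \<in> {i+1..n}"
    show "A i j (comp n X j z) \<in> X i" using bop_maps[OF A_bop[OF i j] comp_mem[OF upper_index_range[OF i j]]] .
  qed
  ultimately show ?thesis unfolding row_def using cv.subspace_add[OF X_subspace[OF i]] by blast
qed

lemma comp_Tmat: "i \<in> {1..n} \<Longrightarrow> comp n X i (Tmat n X D A z) = row i z"
  using comp_eq[of "\<lambda>i. row i z"] row_mem Tmat_eq_sum_row by blast

lemma row_add: assumes i: "i \<in> {1..n}" shows "row i (z + w) = row i z + row i w"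
proof -
  have "D i (comp n X i (z + w)) = D i (comp n X i z) + D i (comp n X i w)"
    using comp_add[OF i] lin_on_add[OF bop_lin[OF bspec[OF Dbop i]] comp_mem[OF i] comp_mem[OF i]] by simp
  moreover have "A i j (comp n X j (z + w)) = A i j (comp n X j z) + A i j (comp n X j w)" if j: "j \<in> {i+1..n}" for j
    using comp_add[OF upper_index_range[OF i j]] lin_on_add[OF bop_lin[OF A_bop[OF i j]] comp_mem[OF upper_index_range[OF i j]] comp_mem[OF upper_index_range[OF i j]]] by simp
  ultimately show ?thesis unfolding row_def by (simp add: sum.distrib algebra_simps)
qed

lemma row_scale: assumes i: "i \<in> {1..n}" shows "row i (c *\<^sub>C z) = c *\<^sub>C row i z"
proof -
  have "D i (comp n X i (c *\<^sub>C z)) = c *\<^sub>C D i (comp n X i z)"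
    using comp_scale[OF i] lin_on_scale[OF bop_lin[OF bspec[OF Dbop i]] comp_mem[OF i]] by simp
  moreover have "A i j (comp n X j (c *\<^sub>C z)) = c *\<^sub>C A i j (comp n X j z)" if j: "j \<in> {i+1..n}" for j
    using comp_scale[OF upper_index_range[OF i j]] lin_on_scale[OF bop_lin[OF A_bop[OF i j]] comp_mem[OF upper_index_range[OF i j]]] by simp
  ultimately show ?thesis unfolding row_def by (simp add: cv.scale_sum_right cv.scale_right_distrib)
qed

lemma Tmat_lin: "lin_on UNIV (Tmat n X D A)"
  unfolding lin_on_def Tmat_eq_sum_row
  by (simp add: row_add row_scale sum.distrib cv.scale_sum_right)

lemma row_bound: assumes i: "i \<in> {1..n}" shows "\<exists>K\<ge>0. \<forall>z. norm (row i z) \<le> K * norm z"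
proof -
  obtain KD where KD: "KD \<ge> 0" "\<forall>x\<in>X i. norm (D i x) \<le> KD * norm x"
    using bop_bound_nonneg[OF bspec[OF Dbop i]] by blast
  define KA where "KA j = (SOME K. K \<ge> 0 \<and> (\<forall>x\<in>X j. norm (A i j x) \<le> K * norm x))" for j
  have KA: "KA j \<ge> 0 \<and> (\<forall>x\<in>X j. norm (A i j x) \<le> KA j * norm x)" if j: "j \<in> {i+1..n}" for j
    unfolding KA_def by (rule someI_ex) (use bop_bound_nonneg[OF A_bop[OF i j]] in blast)
  show ?thesis
  proof (intro exI[of _ "KD + (\<Sum>j\<in>{i+1..n}. KA j)"] conjI allI)
    have "0 \<le> (\<Sum>j\<in>{i+1..n}. KA j)" by (rule sum_nonneg) (use KA in blast)
    then show "0 \<le> KD + (\<Sum>j\<in>{i+1..n}. KA j)" using KD by simp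
    fix z
    have d: "norm (D i (comp n X i z)) \<le> KD * norm z"
    proof -
      have "norm (D i (comp n X i z)) \<le> KD * norm (comp n X i z)" using KD comp_mem[OF i] by blast
      also have "\<dots> \<le> KD * norm z" using comp_norm[OF i] KD by (intro mult_left_mono) auto
      finally show ?thesis .
    qed
    have a: "norm (A i j (comp n X j z)) \<le> KA j * norm z" if j: "j \<in> {i+1..n}" for j
    proof -
      have "norm (A i j (comp n X j z)) \<le> KA j * norm (comp n X j z)" using KA[OF j] comp_mem[OF upper_index_range[OF i j]] by blast
      also have "\<dots> \<le> KA j * norm z" using comp_norm[OF upper_index_range[OF i j]] KA[OF j] by (intro mult_left_mono) auto
      finally show ?thesis .
    qed
    have "norm (row i z) \<le> norm (D i (comp n X i z)) + norm (\<Sum>j\<in>{i+1..n}. A i j (comp n X j z))"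
      unfolding row_def by (rule norm_triangle_ineq)
    also have "norm (\<Sum>j\<in>{i+1..n}. A i j (comp n X j z)) \<le> (\<Sum>j\<in>{i+1..n}. norm (A i j (comp n X j z)))"
      by (rule norm_sum)
    also have "\<dots> \<le> (\<Sum>j\<in>{i+1..n}. KA j * norm z)" using a by (intro sum_mono) blast
    also have "\<dots> = (\<Sum>j\<in>{i+1..n}. KA j) * norm z" by (simp add: sum_distrib_right)
    finally show "norm (row i z) \<le> (KD + (\<Sum>j\<in>{i+1..n}. KA j)) * norm z"
      using d by (simp add: algebra_simps)
  qed
qed

lemma Tmat_bound: "\<exists>K. \<forall>z. norm (Tmat n X D A z) \<le> K * norm z"
proof -
  define KR where "KR i = (SOME K. K \<ge> 0 \<and> (\<forall>z. norm (row i z) \<le> K * norm z))" for i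
  have KR: "\<forall>z. norm (row i z) \<le> KR i * norm z" if i: "i \<in> {1..n}" for i
    using someI_ex[OF row_bound[OF i]] unfolding KR_def by blast
  show ?thesis
  proof (intro exI allI)
    fix z
    have "norm (Tmat n X D A z) \<le> (\<Sum>i=1..n. norm (row i z))" unfolding Tmat_eq_sum_row by (rule norm_sum)
    also have "\<dots> \<le> (\<Sum>i=1..n. KR i * norm z)" using KR by (intro sum_mono) blast
    also have "\<dots> = (\<Sum>i=1..n. KR i) * norm z" by (simp add: sum_distrib_right)
    finally show "norm (Tmat n X D A z) \<le> (\<Sum>i=1..n. KR i) * norm z" .
  qed
qed

lemma Tmat_bop: "bop UNIV UNIV (Tmat n X D A)"
  using Tmat_lin Tmat_bound unfolding bop_def lin_on_def by blast

lemma Tmat_lminus_bop: "bop UNIV UNIV (lminus l (Tmat n X D A))"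
  by (rule bop_lminus[OF cv.subspace_UNIV Tmat_bop])

lemma D_lminus_bop: "k \<in> {1..n} \<Longrightarrow> bop (X k) (X k) (lminus l (D k))"
  using bop_lminus[OF X_subspace] Dbop by blast

definition flag :: "nat \<Rightarrow> 'a set" where
  "flag j = {z. \<forall>k\<in>{Suc j..n}. comp n X k z = 0}"

lemma flag_subspace: "cv.subspace (flag j)"
  unfolding cv.subspace_def flag_def
  by (auto simp: comp_zero comp_add comp_scale)

lemma flag_0: "flag 0 = {0}"
proof
  show "flag 0 \<subseteq> {0}"
  proof
    fix z assume "z \<in> flag 0"
    then have "\<forall>k\<in>{1..n}. comp n X k z = 0" unfolding flag_def by simp
    then have "(\<Sum>k=1..n. comp n X k z) = 0" by simp
    then show "z \<in> {0}" using comp_sum[of z] by simp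
  qed
  show "{0} \<subseteq> flag 0" unfolding flag_def by (auto simp: comp_zero)
qed

lemma flag_n: "flag n = UNIV"
  unfolding flag_def by auto

lemma flag_proj_decomp:
  assumes j: "j < n"
  shows "proj_decomp (flag (Suc j)) (flag j) (X (Suc j)) (comp n X (Suc j))"
proof -
  have sj: "Suc j \<in> {1..n}" using j by simp
  show ?thesis
  proof
    show "cv.subspace (flag (Suc j))" "cv.subspace (flag j)" by (rule flag_subspace)+
    show "cv.subspace (X (Suc j))" by (rule X_subspace[OF sj])
    show "flag j \<subseteq> flag (Suc j)" unfolding flag_def by auto
    show "X (Suc j) \<subseteq> flag (Suc j)"
    proof
      fix x assume x: "x \<in> X (Suc j)"
      show "x \<in> flag (Suc j)" unfolding flag_def using comp_single[OF x sj] by auto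
    qed
    fix x
    show "x \<in> flag j \<Longrightarrow> x \<in> X (Suc j) \<Longrightarrow> x = 0"
    proof -
      assume x: "x \<in> flag j" "x \<in> X (Suc j)"
      have "comp n X (Suc j) x = x" using comp_single[OF x(2) sj sj] by simp
      moreover have "comp n X (Suc j) x = 0" using x(1) sj unfolding flag_def by auto
      ultimately show "x = 0" by simp
    qed
  next
    fix v assume v: "v \<in> flag (Suc j)"
    show "comp n X (Suc j) v \<in> X (Suc j) \<and> v - comp n X (Suc j) v \<in> flag j"
    proof
      show "comp n X (Suc j) v \<in> X (Suc j)" by (rule comp_mem[OF sj])
      show "v - comp n X (Suc j) v \<in> flag j"
        unfolding flag_def
      proof (intro CollectI ballI)
        fix k assume k: "k \<in> {Suc j..n}"
        then have k1: "k \<in> {1..n}" by auto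
        have "comp n X k (v - comp n X (Suc j) v) = comp n X k v - comp n X k (comp n X (Suc j) v)"
          by (rule comp_diff[OF k1])
        also have "comp n X k (comp n X (Suc j) v) = (if k = Suc j then comp n X (Suc j) v else 0)"
          by (rule comp_single[OF comp_mem[OF sj] sj k1])
        finally show "comp n X k (v - comp n X (Suc j) v) = 0"
          using v k unfolding flag_def by (cases "k = Suc j") auto
      qed
    qed
  qed
qed

lemma row_zero:
  assumes i: "i \<in> {1..n}" and z: "\<forall>k\<in>{i..n}. comp n X k z = 0"
  shows "row i z = 0"
proof -
  have "D i (comp n X i z) = 0"
    using z i lin_on_zero[OF bop_lin[OF bspec[OF Dbop i]] X_subspace[OF i]] by auto
  moreover have "A i j (comp n X j z) = 0" if j: "j \<in> {i+1..n}" for j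
  proof -
    have "comp n X j z = 0" using z j by auto
    then show ?thesis using lin_on_zero[OF bop_lin[OF A_bop[OF i j]] X_subspace[OF upper_index_range[OF i j]]] by simp
  qed
  ultimately show ?thesis unfolding row_def by simp
qed

lemma S_flag:
  assumes z: "z \<in> flag j"
  shows "lminus l (Tmat n X D A) z \<in> flag j"
  unfolding flag_def
proof (intro CollectI ballI)
  fix k assume k: "k \<in> {Suc j..n}"
  then have k1: "k \<in> {1..n}" by auto
  have "comp n X k (lminus l (Tmat n X D A) z) = l *\<^sub>C comp n X k z - row k z"
    unfolding lminus_def using comp_diff[OF k1] comp_scale[OF k1] comp_Tmat[OF k1] by simp
  also have "row k z = 0" by (rule row_zero[OF k1]) (use z k in \<open>auto simp: flag_def\<close>)
  also have "comp n X k z = 0" using z k unfolding flag_def by auto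
  finally show "comp n X k (lminus l (Tmat n X D A) z) = 0" by simp
qed

lemma comp_S_on_X:
  assumes u: "u \<in> X i" and i: "i \<in> {1..n}"
  shows "comp n X i (lminus l (Tmat n X D A) u) = lminus l (D i) u"
proof -
  have cu: "comp n X i u = u" using comp_single[OF u i i] by simp
  have "comp n X i (lminus l (Tmat n X D A) u) = l *\<^sub>C comp n X i u - row i u"
    unfolding lminus_def using comp_diff[OF i] comp_scale[OF i] comp_Tmat[OF i] by simp
  also have "row i u = D i u"
  proof -
    have "A i j (comp n X j u) = 0" if j: "j \<in> {i+1..n}" for j
    proof -
      have "comp n X j u = 0" using comp_single[OF u i upper_index_range[OF i j]] j by auto
      then show ?thesis using lin_on_zero[OF bop_lin[OF A_bop[OF i j]] X_subspace[OF upper_index_range[OF i j]]] by simp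
    qed
    then show ?thesis unfolding row_def using cu by simp
  qed
  finally show ?thesis using cu unfolding lminus_def by simp
qed

end

section \<open>Nullity, defect and right Weyl operators\<close>

lemma sum_enat_eq_infinity_iff: "finite I \<Longrightarrow> (\<Sum>i\<in>I. f i) = (\<infinity>::enat) \<longleftrightarrow> (\<exists>i\<in>I. f i = \<infinity>)"
  by (induction I rule: finite_induct) (auto simp: plus_eq_infty_iff_enat)

lemma enat_add_right_cancel: "(x::enat) + c = y + c \<longleftrightarrow> c = \<infinity> \<or> x = y"
  by (metis add.commute enat_add_left_cancel)

lemma enat_add_right_cancel_le: "(x::enat) + c \<le> y + c \<longleftrightarrow> c = \<infinity> \<or> x \<le> y"
  by (metis add.commute enat_add_left_cancel_le)

lemma alpha_beta_cong:
  assumes "\<And>x. x \<in> V \<Longrightarrow> f x = g x"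
  shows "alpha V f = alpha V g" "beta V f = beta V g"
proof -
  have "kernel V f = kernel V g" unfolding kernel_def using assms by auto
  then show "alpha V f = alpha V g" unfolding alpha_def by simp
  have "f ` V = g ` V" using assms by (auto simp: image_def)
  then show "beta V f = beta V g" unfolding beta_def by simp
qed

lemma alpha_beta_minusl:
  assumes V: "cv.subspace V" and T: "lin_on V T"
  shows "alpha V (minusl T l) = alpha V (lminus l T)" "beta V (minusl T l) = beta V (lminus l T)"
proof -
  have "kernel V (minusl T l) = kernel V (lminus l T)"
    unfolding kernel_def minusl_def lminus_def by (auto simp: eq_iff_diff_eq_0[symmetric])
  then show "alpha V (minusl T l) = alpha V (lminus l T)" unfolding alpha_def by simp
  have e: "minusl T l x = lminus l T (- x)" "lminus l T x = minusl T l (- x)" if "x \<in> V" for x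
    unfolding minusl_def lminus_def using lin_on_neg[OF T that] by (simp_all add: cv.scale_minus_right)
  have "minusl T l ` V = lminus l T ` V"
  proof
    show "minusl T l ` V \<subseteq> lminus l T ` V" using e(1) cv.subspace_neg[OF V] by blast
    show "lminus l T ` V \<subseteq> minusl T l ` V" using e(2) cv.subspace_neg[OF V] by blast
  qed
  then show "beta V (minusl T l) = beta V (lminus l T)" unfolding beta_def by simp
qed

lemma right_fredholm_iff:
  assumes "cv.subspace V" "closed V" "bop V V T"
  shows "right_fredholm V T \<longleftrightarrow> beta V T < \<infinity>"
  unfolding right_fredholm_def using kernel_complemented[OF assms] assms(3) by simp

lemma right_weyl_iff:
  assumes "cv.subspace V" "closed V" "bop V V T"
  shows "right_weyl V T \<longleftrightarrow> beta V T < \<infinity> \<and> beta V T \<le> alpha V T"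
proof -
  have "b \<noteq> \<infinity> \<Longrightarrow> 0 \<le> ereal_of_enat a - ereal_of_enat b \<longleftrightarrow> b \<le> a" for a b :: enat
    by (cases a; cases b) auto
  then show ?thesis unfolding right_weyl_def right_fredholm_iff[OF assms] ind_def by auto
qed

section \<open>The triangular operator matrix along the flag \<open>X\<^sub>1 \<subseteq> X\<^sub>1 \<oplus> X\<^sub>2 \<subseteq> \<dots>\<close>\<close>

context triangular_operator_matrix
begin

abbreviation nullity :: "complex \<Rightarrow> nat \<Rightarrow> enat" where "nullity l k \<equiv> alpha (X k) (minusl (D k) l)"
abbreviation defect :: "complex \<Rightarrow> nat \<Rightarrow> enat" where "defect l k \<equiv> beta (X k) (minusl (D k) l)"

lemma alpha_D_lminus: assumes "k \<in> {1..n}" shows "alpha (X k) (lminus l (D k)) = nullity l k"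
  using alpha_beta_minusl(1)[OF X_subspace[OF assms] bop_lin[OF bspec[OF Dbop assms]]] by simp

lemma beta_D_lminus: assumes "k \<in> {1..n}" shows "beta (X k) (lminus l (D k)) = defect l k"
  using alpha_beta_minusl(2)[OF X_subspace[OF assms] bop_lin[OF bspec[OF Dbop assms]]] by simp

lemma right_fredholm_D_iff: "k \<in> {1..n} \<Longrightarrow> right_fredholm (X k) (lminus l (D k)) \<longleftrightarrow> defect l k < \<infinity>"
  using right_fredholm_iff[OF X_subspace X_closed D_lminus_bop] beta_D_lminus by simp

lemma right_weyl_D_iff:
  "k \<in> {1..n} \<Longrightarrow> right_weyl (X k) (lminus l (D k)) \<longleftrightarrow> defect l k < \<infinity> \<and> defect l k \<le> nullity l k"
  using right_weyl_iff[OF X_subspace X_closed D_lminus_bop] alpha_D_lminus beta_D_lminus by simp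

lemma right_weyl_S_iff:
  "right_weyl UNIV (S l) \<longleftrightarrow> beta (flag n) (S l) < \<infinity> \<and> beta (flag n) (S l) \<le> alpha (flag n) (S l)"
  using right_weyl_iff[OF cv.subspace_UNIV closed_UNIV Tmat_lminus_bop] unfolding flag_n .

lemma S_lin: "lin_on V (S l)"
  using bop_lin[OF Tmat_lminus_bop] unfolding lin_on_def by blast

text \<open>Passing from \<open>flag j\<close> to \<open>flag (j+1)\<close> adds the diagonal entry \<open>\<lambda> - D\<^sub>j\<^sub>+\<^sub>1\<close> to the triangular matrix.\<close>

lemma flag_step:
  assumes j: "j < n"
  shows "alpha (flag (Suc j)) (S l) + beta (flag j) (S l) + defect l (Suc j)
           = alpha (flag j) (S l) + nullity l (Suc j) + beta (flag (Suc j)) (S l)"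
    and "defect l (Suc j) \<le> beta (flag (Suc j)) (S l)"
    and "beta (flag (Suc j)) (S l) \<le> beta (flag j) (S l) + defect l (Suc j)"
    and "nullity l (Suc j) < \<infinity> \<Longrightarrow> beta (flag j) (S l) = \<infinity> \<Longrightarrow> beta (flag (Suc j)) (S l) = \<infinity>"
proof -
  have sj: "Suc j \<in> {1..n}" using j by simp
  interpret triangular_block "flag (Suc j)" "flag j" "X (Suc j)" "comp n X (Suc j)" "S l"
  proof (rule triangular_block.intro[OF flag_proj_decomp[OF j]], unfold_locales)
    show "lin_on (flag (Suc j)) (S l)" by (rule S_lin)
    show "S l ` flag (Suc j) \<subseteq> flag (Suc j)" "S l ` flag j \<subseteq> flag j"
      using S_flag by blast+
  qed
  have "alpha (X (Suc j)) T\<^sub>2 = nullity l (Suc j)" "beta (X (Suc j)) T\<^sub>2 = defect l (Suc j)"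
    using alpha_beta_cong[of "X (Suc j)" T\<^sub>2 "lminus l (D (Suc j))"] comp_S_on_X[OF _ sj]
      alpha_D_lminus[OF sj] beta_D_lminus[OF sj] by simp_all
  then show "alpha (flag (Suc j)) (S l) + beta (flag j) (S l) + defect l (Suc j)
           = alpha (flag j) (S l) + nullity l (Suc j) + beta (flag (Suc j)) (S l)"
    and "defect l (Suc j) \<le> beta (flag (Suc j)) (S l)"
    and "beta (flag (Suc j)) (S l) \<le> beta (flag j) (S l) + defect l (Suc j)"
    and "nullity l (Suc j) < \<infinity> \<Longrightarrow> beta (flag j) (S l) = \<infinity> \<Longrightarrow> beta (flag (Suc j)) (S l) = \<infinity>"
    using index_additivity beta_U_le beta_V_le beta_V_infinite by simp_all
qed

lemma flag_0_alpha_beta: "alpha (flag 0) (S l) = 0" "beta (flag 0) (S l) = 0"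
proof -
  have S0: "S l 0 = 0" using lin_on_zero[OF S_lin cv.subspace_UNIV] .
  have "kernel (flag 0) (S l) = {0}" unfolding flag_0 kernel_def using S0 by auto
  then show "alpha (flag 0) (S l) = 0" unfolding alpha_def by (simp add: edim_zero)
  have img: "S l ` flag 0 = {0}" unfolding flag_0 using S0 by simp
  have "is_complement {0} {0} ({0}::'a set)" unfolding is_complement_def by auto
  then have "ecodim ({0}::'a set) {0} = edim ({0}::'a set)"
    by (rule ecodim_eq_edim_complement[OF cv.subspace_single_0 cv.subspace_single_0])
  then show "beta (flag 0) (S l) = 0" unfolding beta_def img by (simp add: flag_0 edim_zero)
qed

lemma flag_index_formula:
  assumes "j \<le> n" "\<forall>s\<in>{1..j}. defect l s < \<infinity>"
  shows "beta (flag j) (S l) < \<infinity> \<and>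
    alpha (flag j) (S l) + (\<Sum>s=1..j. defect l s) = (\<Sum>s=1..j. nullity l s) + beta (flag j) (S l)"
  using assms
proof (induction j)
  case 0
  then show ?case using flag_0_alpha_beta by simp
next
  case (Suc j)
  have j: "j < n" using Suc.prems(1) by simp
  have "j \<le> n" "\<forall>s\<in>{1..j}. defect l s < \<infinity>" using Suc.prems by auto
  with Suc.IH have b: "beta (flag j) (S l) < \<infinity>"
    and IH: "alpha (flag j) (S l) + (\<Sum>s=1..j. defect l s) = (\<Sum>s=1..j. nullity l s) + beta (flag j) (S l)"
    by auto
  have "defect l (Suc j) < \<infinity>" using Suc.prems(2) by simp
  then have "beta (flag j) (S l) + defect l (Suc j) < \<infinity>"
    using b by (simp add: plus_eq_infty_iff_enat)
  then have fin: "beta (flag (Suc j)) (S l) < \<infinity>"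
    using flag_step(3)[OF j, of l] by (rule le_less_trans[rotated])
  let ?a' = "alpha (flag (Suc j)) (S l)" and ?b' = "beta (flag (Suc j)) (S l)"
  let ?b = "beta (flag j) (S l)"
  let ?SA = "\<Sum>s=1..j. nullity l s" and ?SB = "\<Sum>s=1..j. defect l s"
  have "(?a' + (?SB + defect l (Suc j))) + ?b = (?a' + ?b + defect l (Suc j)) + ?SB"
    by (simp only: ac_simps)
  also have "\<dots> = (alpha (flag j) (S l) + nullity l (Suc j) + ?b') + ?SB"
    by (simp only: flag_step(1)[OF j])
  also have "\<dots> = (alpha (flag j) (S l) + ?SB) + nullity l (Suc j) + ?b'"
    by (simp only: ac_simps)
  also have "\<dots> = (?SA + ?b) + nullity l (Suc j) + ?b'"
    by (simp only: IH)
  also have "\<dots> = (?SA + nullity l (Suc j) + ?b') + ?b"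
    by (simp only: ac_simps)
  finally have "?a' + (?SB + defect l (Suc j)) = ?SA + nullity l (Suc j) + ?b'"
    unfolding enat_add_right_cancel using b by (auto simp del: enat_ord_simps)
  with fin show ?case by simp
qed

lemma flag_defect_infinite:
  assumes k: "k \<in> {1..n}" and bk: "defect l k = \<infinity>" and kj: "k \<le> j" and jn: "j \<le> n"
    and a: "\<forall>s. k < s \<and> s \<le> j \<longrightarrow> nullity l s < \<infinity>"
  shows "beta (flag j) (S l) = \<infinity>"
  using kj jn a
proof (induction j rule: dec_induct)
  case base
  obtain j0 where j0: "k = Suc j0" using k by (cases k) auto
  then show ?case using flag_step(2)[of j0 l] bk k by simp
next
  case (step j)
  then show ?case using flag_step(4)[of j l] by simp
qed

end

section \<open>Comparing the right Weyl spectra\<close>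

context triangular_operator_matrix
begin

lemma right_weyl_S_if_right_weyl_D:
  assumes "\<forall>k\<in>{1..n}. right_weyl (X k) (lminus l (D k))"
  shows "right_weyl UNIV (S l)"
proof -
  have rw: "\<forall>k\<in>{1..n}. defect l k < \<infinity> \<and> defect l k \<le> nullity l k"
    using assms right_weyl_D_iff by blast
  then have fin: "beta (flag n) (S l) < \<infinity>"
    and eq: "alpha (flag n) (S l) + (\<Sum>s=1..n. defect l s) = (\<Sum>s=1..n. nullity l s) + beta (flag n) (S l)"
    using flag_index_formula[of n l] by auto
  have sfin: "(\<Sum>s=1..n. defect l s) \<noteq> \<infinity>"
    using sum_enat_eq_infinity_iff[of "{1..n}" "defect l"] rw by auto
  have "(\<Sum>s=1..n. defect l s) \<le> (\<Sum>s=1..n. nullity l s)"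
    using rw by (intro sum_mono) blast
  then have "beta (flag n) (S l) + (\<Sum>s=1..n. defect l s) \<le> alpha (flag n) (S l) + (\<Sum>s=1..n. defect l s)"
    unfolding eq by (simp add: add.commute add_right_mono)
  then have "beta (flag n) (S l) \<le> alpha (flag n) (S l)"
    using sfin by (simp only: enat_add_right_cancel_le) blast
  with fin show ?thesis using right_weyl_S_iff by blast
qed

lemma Delta2_if_finite_defects:
  assumes fin: "\<forall>s\<in>{1..n}. defect l s < \<infinity>" and S: "right_weyl UNIV (S l)"
    and k: "k \<in> {1..n}" "\<not> right_weyl (X k) (lminus l (D k))"
  shows "(\<Sum>s=1..n. nullity l s) \<ge> (\<Sum>s=1..n. defect l s)" "defect l k > nullity l k"
proof -
  have Sw: "beta (flag n) (S l) < \<infinity>" "beta (flag n) (S l) \<le> alpha (flag n) (S l)"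
    using S right_weyl_S_iff by blast+
  have "(\<Sum>s=1..n. defect l s) + beta (flag n) (S l) \<le> alpha (flag n) (S l) + (\<Sum>s=1..n. defect l s)"
    using Sw(2) by (simp add: add.commute add_right_mono)
  also have "\<dots> = (\<Sum>s=1..n. nullity l s) + beta (flag n) (S l)"
    using flag_index_formula[of n l] fin by auto
  finally show "(\<Sum>s=1..n. nullity l s) \<ge> (\<Sum>s=1..n. defect l s)"
    using Sw(1) by (simp only: enat_add_right_cancel_le) auto
  show "defect l k > nullity l k"
    using right_weyl_D_iff[OF k(1)] k(2) fin k(1) by (meson not_le)
qed

text \<open>Take \<open>k\<close> maximal with \<open>\<beta>(D\<^sub>k - \<lambda>) = \<infinity>\<close>: if all later nullities were finite, the infinite
  defect would propagate up the flag to \<open>\<beta>(T - \<lambda>)\<close>.\<close>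

lemma Delta1_if_infinite_defect:
  assumes S: "right_weyl UNIV (S l)" and inf: "\<exists>s\<in>{1..n}. defect l s = \<infinity>"
  obtains k where "k \<in> {1..n-1}" "defect l k = \<infinity>" "\<forall>s. k + 1 \<le> s \<and> s \<le> n - 1 \<longrightarrow> defect l s < \<infinity>"
    "(\<Sum>s=k+1..n. nullity l s) = \<infinity>" "defect l n < \<infinity>"
    "(\<Sum>s=1..n. nullity l s) \<ge> (\<Sum>s=1..n. defect l s)"
proof -
  define K where "K = {s\<in>{1..n}. defect l s = \<infinity>}"
  have K: "finite K" "K \<noteq> {}" using inf unfolding K_def by auto
  define k where "k = Max K"
  have k: "k \<in> {1..n}" "defect l k = \<infinity>" using Max_in[OF K] unfolding k_def K_def by auto
  have above: "defect l s < \<infinity>" if "s \<in> {1..n}" "s > k" for s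
    using Max_ge[OF K(1), of s] that unfolding k_def K_def by fastforce
  have Sw: "beta (flag n) (S l) < \<infinity>" using S right_weyl_S_iff by blast
  have suminf: "(\<Sum>s=k+1..n. nullity l s) = \<infinity>"
  proof (rule ccontr)
    assume "(\<Sum>s=k+1..n. nullity l s) \<noteq> \<infinity>"
    then have "\<forall>s. k < s \<and> s \<le> n \<longrightarrow> nullity l s < \<infinity>"
      using sum_enat_eq_infinity_iff[of "{k+1..n}" "nullity l"] by auto
    then have "beta (flag n) (S l) = \<infinity>" using flag_defect_infinite[OF k] k(1) by auto
    then show False using Sw by simp
  qed
  then have kn: "k \<noteq> n" by auto
  have "(\<Sum>s=1..n. nullity l s) = \<infinity>"
    using suminf sum_enat_eq_infinity_iff[of "{k+1..n}" "nullity l"]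
      sum_enat_eq_infinity_iff[of "{1..n}" "nullity l"] by auto
  then show thesis
    by (intro that[of k]) (use k kn above suminf in auto)
qed

lemma not_right_weyl_D_iff:
  "(\<exists>k\<in>{1..n}. \<not> right_weyl (X k) (lminus l (D k))) \<longleftrightarrow>
    \<not> right_weyl UNIV (S l) \<or>
    (\<exists>k\<in>{1..n-1}. defect l k = \<infinity> \<and> (\<forall>s. k + 1 \<le> s \<and> s \<le> n - 1 \<longrightarrow> defect l s < \<infinity>) \<and>
        (\<Sum>s=k+1..n. nullity l s) = \<infinity> \<and> defect l n < \<infinity> \<and>
        (\<Sum>s=1..n. nullity l s) \<ge> (\<Sum>s=1..n. defect l s)) \<or>
    (\<exists>k\<in>{1..n}. (\<forall>s\<in>{1..n}. defect l s < \<infinity>) \<and>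
        (\<Sum>s=1..n. nullity l s) \<ge> (\<Sum>s=1..n. defect l s) \<and> defect l k > nullity l k)"
  (is "?L \<longleftrightarrow> ?R")
proof
  assume ?L
  then obtain k where k: "k \<in> {1..n}" "\<not> right_weyl (X k) (lminus l (D k))" by blast
  consider "\<not> right_weyl UNIV (S l)" | "right_weyl UNIV (S l)" "\<forall>s\<in>{1..n}. defect l s < \<infinity>"
    | "right_weyl UNIV (S l)" "\<exists>s\<in>{1..n}. defect l s = \<infinity>"
    by force
  then show ?R
  proof cases
    case 2
    then show ?R using Delta2_if_finite_defects[OF _ _ k] k(1) by blast
  next
    case 3
    then show ?R by (elim Delta1_if_infinite_defect) blast+
  qed simp
next
  assume R: ?R
  show ?L
  proof (rule ccontr)
    assume "\<not> ?L"
    then have rw: "\<forall>k\<in>{1..n}. right_weyl (X k) (lminus l (D k))" by blast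
    then have "\<forall>k\<in>{1..n}. defect l k < \<infinity> \<and> defect l k \<le> nullity l k"
      using right_weyl_D_iff by blast
    then have fin: "\<And>k. k \<in> {1..n} \<Longrightarrow> defect l k \<noteq> \<infinity> \<and> \<not> nullity l k < defect l k"
      by (auto simp: not_less)
    have "right_weyl UNIV (S l)" using rw by (rule right_weyl_S_if_right_weyl_D)
    moreover have "k \<in> {1..n}" if "k \<in> {1..n-1}" for k using that by auto
    ultimately show False using R fin by blast
  qed
qed

end

theorem mainTheorem4:
  fixes n :: nat
    and X :: "nat \<Rightarrow> 'a::chilbert set"
    and D :: "nat \<Rightarrow> 'a \<Rightarrow> 'a"
    and A :: "nat \<Rightarrow> nat \<Rightarrow> 'a \<Rightarrow> 'a"
  assumes "n \<ge> 2"
    and "orth_decomp n X"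
    and "\<forall>k\<in>{1..n}. edim (X k) = \<infinity>"
    and "\<forall>k\<in>{1..n}. bop (X k) (X k) (D k)"
    and "\<forall>i j. 1 \<le> i \<and> i < j \<and> j \<le> n \<longrightarrow> bop (X j) (X i) (A i j)"
  shows "(\<Union>k\<in>{1..n}. sigma_rw (X k) (D k)) =
     sigma_rw UNIV (Tmat n X D A)
     \<union> (\<Union>k\<in>{1..n-1}.
          {l. beta (X k) (minusl (D k) l) = \<infinity> \<and>
              (\<forall>s. k + 1 \<le> s \<and> s \<le> n - 1 \<longrightarrow> beta (X s) (minusl (D s) l) < \<infinity>) \<and>
              (\<Sum>s=k+1..n. alpha (X s) (minusl (D s) l)) = \<infinity>}
          \<inter> rho_re (X n) (D n)
          \<inter> {l. (\<Sum>s=1..n. alpha (X s) (minusl (D s) l)) \<ge> (\<Sum>s=1..n. beta (X s) (minusl (D s) l))})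
     \<union> (\<Union>k\<in>{1..n}.
          {l. (\<forall>s\<in>{1..n}. beta (X s) (minusl (D s) l) < \<infinity>) \<and>
              (\<Sum>s=1..n. alpha (X s) (minusl (D s) l)) \<ge> (\<Sum>s=1..n. beta (X s) (minusl (D s) l)) \<and>
              beta (X k) (minusl (D k) l) > alpha (X k) (minusl (D k) l)})"
proof -
  interpret triangular_operator_matrix n X D A
    by unfold_locales (use assms in auto)
  have rho: "l \<in> rho_re (X n) (D n) \<longleftrightarrow> defect l n < \<infinity>" for l
    using right_fredholm_D_iff[of n l] assms(1) unfolding rho_re_def sigma_re_def by simp
  show ?thesis
    by (rule set_eqI)
      (simp only: UN_iff Un_iff Int_iff mem_Collect_eq rho sigma_rw_def not_right_weyl_D_iff conj_assoc disj_assoc)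
qed

end
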